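(* Let $A,M\in\mathbb{C}^{n\times n}$ be Hermitian with $M$ positive definite, and let the eigenvalues of the pair $(A,M)$ be $\lambda_1<\lambda_2\le\cdots\le\lambda_n$. Put $A_{\lambda_1}=A-\lambda_1 M$. Let $\sigma<\lambda_1$, $A_\sigma=A-\sigma M$, let $T\in\mathbb{C}^{n\times n}$ be Hermitian positive definite and $\kappa=\operatorname{cond}_2(T^{1/2}A_\sigma T^{1/2})$ (the ratio of the largest to the smallest eigenvalue of $T^{1/2}A_\sigma T^{1/2}$). Let $x^{(0)}\in\mathbb{C}^n$ be neither an eigenvector of $(A,M)$ associated with $\lambda_1$ nor $M$-orthogonal to the eigenspace associated with $\lambda_1$, and let $x^{(0)},x^{(1)},\ldots$ be the iterates of the following heuristic preconditioned CG iteration (for as long as it is defined): set $r^{(0)}=-A_{\lambda_1}x^{(0)}$, $\gamma^{(0)}=(Tr^{(0)})^*r^{(0)}$, $p^{(0)}=Tr^{(0)}$, and for $i=0,1,\ldots$: $w=A_{\lambda_1}p^{(i)}$, $\delta=\gamma^{(i)}/(w^*p^{(i)})$, $x^{(i+1)}=x^{(i)}+\delta p^{(i)}$, $r^{(i+1)}=r^{(i)}-\delta w$, $\gamma^{(i+1)}=(Tr^{(i+1)})^*r^{(i+1)}$, $p^{(i+1)}=Tr^{(i+1)}+(\gamma^{(i+1)}/\gamma^{(i)})p^{(i)}$. Let $\lambda^{(i)}=\frac{x^{(i)*}Ax^{(i)}}{x^{(i)*}Mx^{(i)}}$. Then for $i=0,1,\ldots$, $$\lambda^{(i)}-\lambda_1\le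 \big(\mathcal{C}_i(\varphi)\big)^{-2}\frac{\|x^{(0)}\|_M^2}{\|x^{(i)}\|_M^2}(\lambda^{(0)}-\lambda_1),\qquad \varphi=\frac{\eta+1}{\eta-1},\quad \eta=\kappa\,\frac{(\lambda_n-\lambda_1)(\lambda_2-\sigma)}{(\lambda_2-\lambda_1)(\lambda_n-\sigma)}.$$
   Context: $\mathcal{C}_i$ is the Chebyshev polynomial of the first kind of degree $i$. $\|y\|_M=(y^*My)^{1/2}$. $T^{1/2}$ is the Hermitian positive definite square root of $T$. *)

theory Defs
  imports Complex_Main "Jordan_Normal_Form.Schur_Decomposition" "Jordan_Normal_Form.Char_Poly"
begin

definition ip :: "complex vec \<Rightarrow> complex vec \<Rightarrow> complex" where
  "ip u v = conjugate u \<bullet> v"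

definition hermitian :: "nat \<Rightarrow> complex mat \<Rightarrow> bool" where
  "hermitian n A \<longleftrightarrow> A \<in> carrier_mat n n \<and> mat_adjoint A = A"

definition pos_def :: "nat \<Rightarrow> complex mat \<Rightarrow> bool" where
  "pos_def n A \<longleftrightarrow> hermitian n A \<and>
     (\<forall>x \<in> carrier_vec n. x \<noteq> 0\<^sub>v n \<longrightarrow> Re (ip x (A *\<^sub>v x)) > 0)"

definition msqrt :: "nat \<Rightarrow> complex mat \<Rightarrow> complex mat" where
  "msqrt n T = (THE S. pos_def n S \<and> S * S = T)"

(* ratio of largest to smallest eigenvalue (eigenvalues of a Hermitian matrix are real) *)
definition cond2 :: "complex mat \<Rightarrow> real" where
  "cond2 B = Max (Re ` {k. eigenvalue B k}) / Min (Re ` {k. eigenvalue B k})"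

fun cheb :: "nat \<Rightarrow> real \<Rightarrow> real" where
  "cheb 0 x = 1"
| "cheb (Suc 0) x = x"
| "cheb (Suc (Suc k)) x = 2 * x * cheb (Suc k) x - cheb k x"

definition mnorm :: "complex mat \<Rightarrow> complex vec \<Rightarrow> real" where
  "mnorm M y = sqrt (Re (ip y (M *\<^sub>v y)))"

definition rq :: "complex mat \<Rightarrow> complex mat \<Rightarrow> complex vec \<Rightarrow> real" where
  "rq A M x = Re (ip x (A *\<^sub>v x)) / Re (ip x (M *\<^sub>v x))"

(* Heuristic PCG iteration for A_{lambda_1} = Al, preconditioner T;
   state (x^(i), r^(i), gamma^(i), p^(i)) *)
definition pcg_step :: "complex mat \<Rightarrow> complex mat \<Rightarrow>
    complex vec \<times> complex vec \<times> complex \<times> complex vec \<Rightarrow>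
    complex vec \<times> complex vec \<times> complex \<times> complex vec" where
  "pcg_step Al T st = (case st of (x, r, g, p) \<Rightarrow>
     let w = Al *\<^sub>v p;
         \<delta> = g / ip w p;
         x' = x + \<delta> \<cdot>\<^sub>v p;
         r' = r - \<delta> \<cdot>\<^sub>v w;
         g' = ip (T *\<^sub>v r') r';
         p' = T *\<^sub>v r' + (g' / g) \<cdot>\<^sub>v p
     in (x', r', g', p'))"

primrec pcg :: "complex mat \<Rightarrow> complex mat \<Rightarrow> complex vec \<Rightarrow> nat \<Rightarrow>
    complex vec \<times> complex vec \<times> complex \<times> complex vec" where
  "pcg Al T x0 0 = (let r = - (Al *\<^sub>v x0) in (x0, r, ip (T *\<^sub>v r) r, T *\<^sub>v r))"
| "pcg Al T x0 (Suc i) = pcg_step Al T (pcg Al T x0 i)"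

definition pcg_x where "pcg_x Al T x0 i = fst (pcg Al T x0 i)"
definition pcg_gamma where "pcg_gamma Al T x0 i = fst (snd (snd (pcg Al T x0 i)))"
definition pcg_p where "pcg_p Al T x0 i = snd (snd (snd (pcg Al T x0 i)))"

end

theory Submission
  imports Defs
begin

text \<open>
  Since \<open>A - \<lambda>\<^sub>1 M\<close> is positive semidefinite, the PCG iterate \<open>x\<^sup>(\<^sup>i\<^sup>)\<close> minimizes the energy
  \<open>x\<^sup>* (A - \<lambda>\<^sub>1 M) x\<close> over \<open>x\<^sup>(\<^sup>0\<^sup>)\<close> plus the span of the Krylov vectors \<open>(T (A - \<lambda>\<^sub>1 M))\<^sup>m x\<^sup>(\<^sup>0\<^sup>)\<close>,
  \<open>1 \<le> m \<le> i\<close>. Expanding \<open>x\<^sup>(\<^sup>0\<^sup>)\<close> in eigenvectors of the pencil \<open>(A - \<lambda>\<^sub>1 M, T\<^sup>-\<^sup>1)\<close> bounds this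
  energy by \<open>max |p(\<mu>)|\<^sup>2\<close> times the energy of \<open>x\<^sup>(\<^sup>0\<^sup>)\<close>, for any polynomial \<open>p\<close> of degree \<open>i\<close> with
  \<open>p(0) = 1\<close>, the maximum taken over the nonzero eigenvalues \<open>\<mu>\<close>. Comparing Rayleigh quotients
  with the pencil \<open>(A - \<sigma> M, T\<^sup>-\<^sup>1)\<close>, whose eigenvalues are those of \<open>T\<^sup>1\<^sup>/\<^sup>2 (A - \<sigma> M) T\<^sup>1\<^sup>/\<^sup>2\<close>,
  places these \<open>\<mu>\<close> in an interval \<open>[a, b]\<close> with \<open>b / a = \<eta>\<close>, and the shifted Chebyshev polynomial
  yields the factor \<open>\<C>\<^sub>i(\<phi>)\<^sup>-\<^sup>2\<close>. Finally \<open>\<lambda>\<^sup>(\<^sup>i\<^sup>) - \<lambda>\<^sub>1\<close> is that energy divided by \<open>\<parallel>x\<^sup>(\<^sup>i\<^sup>)\<parallel>\<^sub>M\<^sup>2\<close>.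
\<close>

section \<open>Inner products and Hermitian matrices\<close>

lemma ip_conv_sum: "u \<in> carrier_vec n \<Longrightarrow> v \<in> carrier_vec n \<Longrightarrow> ip u v = (\<Sum>i<n. cnj (u$i) * v$i)"
  unfolding ip_def scalar_prod_def by (auto intro!: sum.cong simp: atLeast0LessThan)

lemma row_scalar_prod_conv_sum[simp]: "A \<in> carrier_mat n n \<Longrightarrow> v \<in> carrier_vec n \<Longrightarrow> i < n \<Longrightarrow>
   row A i \<bullet> v = (\<Sum>j<n. A$$(i,j) * v$j)"
  by (auto simp: scalar_prod_def atLeast0LessThan intro!: sum.cong)

lemma mult_mat_vec_conv_sum: "A \<in> carrier_mat n n \<Longrightarrow> v \<in> carrier_vec n \<Longrightarrow> i < n \<Longrightarrow>
   (A *\<^sub>v v) $ i = (\<Sum>j<n. A$$(i,j) * v$j)"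
  by (auto simp: scalar_prod_def atLeast0LessThan intro!: sum.cong)

lemma times_mat_conv_sum: "A \<in> carrier_mat n m \<Longrightarrow> B \<in> carrier_mat m k \<Longrightarrow> i < n \<Longrightarrow> j < k \<Longrightarrow>
   (A * B) $$ (i,j) = (\<Sum>l<m. A$$(i,l) * B$$(l,j))"
  by (auto simp: scalar_prod_def atLeast0LessThan intro!: sum.cong)

lemma smult_mat_mult_vec:
  assumes A: "A \<in> carrier_mat n n" and v: "v \<in> carrier_vec n"
  shows "(a \<cdot>\<^sub>m A) *\<^sub>v v = a \<cdot>\<^sub>v (A *\<^sub>v v)"
proof (rule eq_vecI)
  fix i assume "i < dim_vec (a \<cdot>\<^sub>v (A *\<^sub>v v))"
  hence i: "i < n" using A by simp
  have "((a \<cdot>\<^sub>m A) *\<^sub>v v) $ i = (\<Sum>j<n. (a \<cdot>\<^sub>m A)$$(i,j) * v$j)"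
    by (rule mult_mat_vec_conv_sum) (use A v i in auto)
  also have "\<dots> = a * (\<Sum>j<n. A$$(i,j) * v$j)" using A i by (simp add: sum_distrib_left mult.assoc)
  also have "\<dots> = (a \<cdot>\<^sub>v (A *\<^sub>v v)) $ i" using A v i by (simp add: mult_mat_vec_conv_sum)
  finally show "((a \<cdot>\<^sub>m A) *\<^sub>v v) $ i = (a \<cdot>\<^sub>v (A *\<^sub>v v)) $ i" .
qed (use A in auto)

lemma diff_smult_mat_mult_vec:
  fixes A M :: "complex mat"
  assumes "A \<in> carrier_mat n n" "M \<in> carrier_mat n n" "x \<in> carrier_vec n"
  shows "(A - s \<cdot>\<^sub>m M) *\<^sub>v x = A *\<^sub>v x - s \<cdot>\<^sub>v (M *\<^sub>v x)"
  using assms by (simp add: minus_mult_distrib_mat_vec[of _ n n] smult_mat_mult_vec)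

lemma mult_mat_vec_zero: "A \<in> carrier_mat n n \<Longrightarrow> A *\<^sub>v 0\<^sub>v n = (0\<^sub>v n :: complex vec)"
  by (rule eq_vecI) (auto simp: mult_mat_vec_conv_sum)

lemma zero_smult_vec: "v \<in> carrier_vec n \<Longrightarrow> (0::complex) \<cdot>\<^sub>v v = 0\<^sub>v n"
  by (rule eq_vecI) auto

lemma mult_mat_vec_unit_vec:
  fixes A :: "complex mat"
  assumes A: "A \<in> carrier_mat n n" and i: "i < n" and j: "j < n"
  shows "(A *\<^sub>v unit_vec n j) $ i = A $$ (i,j)"
proof -
  have "(A *\<^sub>v unit_vec n j) $ i = (\<Sum>l<n. A$$(i,l) * unit_vec n j $ l)"
    using A i by (simp add: mult_mat_vec_conv_sum)
  also have "\<dots> = (\<Sum>l<n. if l = j then A$$(i,l) else 0)"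
    by (intro sum.cong refl) (auto simp: unit_vec_def)
  also have "\<dots> = A $$ (i,j)" using j by simp
  finally show ?thesis .
qed

lemma mat_eqI_mult_vec:
  fixes A B :: "complex mat"
  assumes A: "A \<in> carrier_mat n n" and B: "B \<in> carrier_mat n n"
    and eq: "\<And>x. x \<in> carrier_vec n \<Longrightarrow> A *\<^sub>v x = B *\<^sub>v x"
  shows "A = B"
proof (rule eq_matI)
  fix i j assume "i < dim_row B" "j < dim_col B"
  then show "A $$ (i,j) = B $$ (i,j)"
    using B mult_mat_vec_unit_vec[OF A, of i j] mult_mat_vec_unit_vec[OF B, of i j]
      eq[of "unit_vec n j"] by auto
qed (use A B in auto)

lemma cnj_ip: "u \<in> carrier_vec n \<Longrightarrow> v \<in> carrier_vec n \<Longrightarrow> cnj (ip u v) = ip v u"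
  by (simp add: ip_conv_sum mult.commute)

lemma ip_add_right: "u \<in> carrier_vec n \<Longrightarrow> v \<in> carrier_vec n \<Longrightarrow> w \<in> carrier_vec n \<Longrightarrow>
    ip u (v + w) = ip u v + ip u w"
  by (simp add: ip_conv_sum[of _ n] distrib_left sum.distrib)

lemma ip_add_left: "u \<in> carrier_vec n \<Longrightarrow> v \<in> carrier_vec n \<Longrightarrow> w \<in> carrier_vec n \<Longrightarrow>
    ip (v + w) u = ip v u + ip w u"
  by (simp add: ip_conv_sum[of _ n] distrib_right sum.distrib)

lemma ip_minus_right: "u \<in> carrier_vec n \<Longrightarrow> v \<in> carrier_vec n \<Longrightarrow> w \<in> carrier_vec n \<Longrightarrow>
    ip u (v - w) = ip u v - ip u w"
  by (simp add: ip_conv_sum[of _ n] right_diff_distrib sum_subtractf)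

lemma ip_minus_left: "u \<in> carrier_vec n \<Longrightarrow> v \<in> carrier_vec n \<Longrightarrow> w \<in> carrier_vec n \<Longrightarrow>
    ip (v - w) u = ip v u - ip w u"
  by (simp add: ip_conv_sum[of _ n] left_diff_distrib sum_subtractf)

lemma ip_smult_right: "u \<in> carrier_vec n \<Longrightarrow> v \<in> carrier_vec n \<Longrightarrow> ip u (a \<cdot>\<^sub>v v) = a * ip u v"
  by (simp add: ip_conv_sum[of _ n] sum_distrib_left mult.left_commute)

lemma ip_smult_left: "u \<in> carrier_vec n \<Longrightarrow> v \<in> carrier_vec n \<Longrightarrow> ip (a \<cdot>\<^sub>v v) u = cnj a * ip v u"
  by (simp add: ip_conv_sum[of _ n] sum_distrib_left mult.assoc)

lemma ip_zero_right: "u \<in> carrier_vec n \<Longrightarrow> ip u (0\<^sub>v n) = 0"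
  by (simp add: ip_conv_sum[of u n "0\<^sub>v n"])

lemma ip_zero_left: "u \<in> carrier_vec n \<Longrightarrow> ip (0\<^sub>v n) u = 0"
  by (simp add: ip_conv_sum[of "0\<^sub>v n" n u])

lemma cnj_mult_self: "cnj z * z = complex_of_real ((Re z)\<^sup>2 + (Im z)\<^sup>2)"
  by (simp add: complex_eq_iff power2_eq_square)

lemma ip_self_conv_sum: "u \<in> carrier_vec n \<Longrightarrow> ip u u = of_real (\<Sum>i<n. (Re (u$i))\<^sup>2 + (Im (u$i))\<^sup>2)"
  by (simp add: ip_conv_sum cnj_mult_self of_real_sum)

lemma Re_ip_self_nonneg: "u \<in> carrier_vec n \<Longrightarrow> Re (ip u u) \<ge> 0"
  by (simp add: ip_self_conv_sum sum_nonneg)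

lemma Im_ip_self: "u \<in> carrier_vec n \<Longrightarrow> Im (ip u u) = 0"
  by (simp add: ip_self_conv_sum)

lemma ip_self_eq_0:
  assumes u: "u \<in> carrier_vec n" and z: "ip u u = 0"
  shows "u = 0\<^sub>v n"
proof (rule eq_vecI)
  fix i assume i: "i < dim_vec (0\<^sub>v n :: complex vec)"
  have "(\<Sum>i<n. (Re (u$i))\<^sup>2 + (Im (u$i))\<^sup>2) = 0" using z ip_self_conv_sum[OF u] by (metis of_real_eq_0_iff)
  hence "\<forall>i\<in>{..<n}. (Re (u$i))\<^sup>2 + (Im (u$i))\<^sup>2 = 0" by (subst sum_nonneg_eq_0_iff[symmetric]) auto
  thus "u $ i = 0\<^sub>v n $ i" using i by (auto simp: complex_eq_iff)
qed (use u in auto)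

lemma Re_ip_self_pos: "u \<in> carrier_vec n \<Longrightarrow> u \<noteq> 0\<^sub>v n \<Longrightarrow> Re (ip u u) > 0"
  using Re_ip_self_nonneg[of u n] Im_ip_self[of u n] ip_self_eq_0[of u n]
  by (cases "Re (ip u u) = 0") (auto simp: complex_eq_iff)

lemma hermitian_carrier: "hermitian n A \<Longrightarrow> A \<in> carrier_mat n n"
  unfolding hermitian_def by auto

lemma hermitian_entry:
  assumes h: "hermitian n A" and i: "i < n" and j: "j < n"
  shows "A$$(i,j) = cnj (A$$(j,i))"
proof -
  have A: "A \<in> carrier_mat n n" and e: "mat_adjoint A = A" using h unfolding hermitian_def by auto
  have "A$$(i,j) = mat_adjoint A $$ (i,j)" using e by simp
  also have "\<dots> = cnj (A$$(j,i))" using A i j unfolding mat_adjoint_def by (simp add: mat_of_rows_def)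
  finally show ?thesis .
qed

lemma ip_mult_mat_vec_swap:
  assumes A: "A \<in> carrier_mat n n" and B: "B \<in> carrier_mat n n"
    and AB: "\<And>i j. i<n \<Longrightarrow> j<n \<Longrightarrow> B$$(j,i) = cnj (A$$(i,j))"
    and u: "u \<in> carrier_vec n" and v: "v \<in> carrier_vec n"
  shows "ip u (A *\<^sub>v v) = ip (B *\<^sub>v u) v"
proof -
  have "ip u (A *\<^sub>v v) = (\<Sum>i<n. cnj (u$i) * (\<Sum>j<n. A$$(i,j) * v$j))"
    using A u v by (simp add: ip_conv_sum[of u n "A *\<^sub>v v"] mult_mat_vec_conv_sum)
  also have "\<dots> = (\<Sum>i<n. \<Sum>j<n. cnj (u$i) * A$$(i,j) * v$j)"
    by (simp add: sum_distrib_left mult.assoc)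
  also have "\<dots> = (\<Sum>j<n. \<Sum>i<n. cnj (u$i) * A$$(i,j) * v$j)" by (rule sum.swap)
  also have "\<dots> = (\<Sum>j<n. \<Sum>i<n. cnj (B$$(j,i) * u$i) * v$j)"
    by (intro sum.cong refl) (simp add: AB)
  also have "\<dots> = (\<Sum>j<n. cnj (\<Sum>i<n. B$$(j,i) * u$i) * v$j)"
    by (simp add: sum_distrib_right cnj_sum)
  also have "\<dots> = ip (B *\<^sub>v u) v"
    using B u v by (simp add: ip_conv_sum[of "B *\<^sub>v u" n v] mult_mat_vec_conv_sum)
  finally show ?thesis .
qed

lemma hermitian_ip: "hermitian n A \<Longrightarrow> u \<in> carrier_vec n \<Longrightarrow> v \<in> carrier_vec n \<Longrightarrow>
    ip u (A *\<^sub>v v) = ip (A *\<^sub>v u) v"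
  by (intro ip_mult_mat_vec_swap) (auto intro: hermitian_entry hermitian_carrier)

lemma hermitian_form_real:
  assumes h: "hermitian n A" and u: "u \<in> carrier_vec n"
  shows "cnj (ip u (A *\<^sub>v u)) = ip u (A *\<^sub>v u)" "Im (ip u (A *\<^sub>v u)) = 0"
proof -
  show "cnj (ip u (A *\<^sub>v u)) = ip u (A *\<^sub>v u)"
    using cnj_ip[of u n "A *\<^sub>v u"] hermitian_ip[OF h u u] hermitian_carrier[OF h] u by auto
  thus "Im (ip u (A *\<^sub>v u)) = 0" by (simp add: complex_eq_iff)
qed

lemma ip_unit_vec:
  assumes w: "w \<in> carrier_vec n" and i: "i < n"
  shows "ip (unit_vec n i) w = w $ i"
proof -
  have "ip (unit_vec n i) w = (\<Sum>l<n. cnj (unit_vec n i $ l) * w $ l)"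
    using w by (simp add: ip_conv_sum[of _ n])
  also have "\<dots> = (\<Sum>l<n. if l = i then w $ l else 0)"
    by (intro sum.cong refl) (auto simp: unit_vec_def)
  also have "\<dots> = w $ i" using i by simp
  finally show ?thesis .
qed

lemma hermitianI:
  assumes A: "A \<in> carrier_mat n n"
    and s: "\<And>x y. x \<in> carrier_vec n \<Longrightarrow> y \<in> carrier_vec n \<Longrightarrow> ip x (A *\<^sub>v y) = ip (A *\<^sub>v x) y"
  shows "hermitian n A"
proof -
  have ent: "A $$ (i,j) = ip (unit_vec n i) (A *\<^sub>v unit_vec n j)" if "i < n" "j < n" for i j
    using that A by (simp add: ip_unit_vec mult_mat_vec_unit_vec)
  have "mat_adjoint A = A"
  proof (rule eq_matI)
    fix i j assume "i < dim_row A" "j < dim_col A"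
    hence i: "i < n" and j: "j < n" using A by auto
    have "mat_adjoint A $$ (i,j) = cnj (A $$ (j,i))"
      using A i j unfolding mat_adjoint_def by (simp add: mat_of_rows_def)
    also have "\<dots> = cnj (ip (A *\<^sub>v unit_vec n j) (unit_vec n i))"
      using ent[OF j i] s[of "unit_vec n j" "unit_vec n i"] by simp
    also have "\<dots> = A $$ (i,j)" using ent[OF i j] A by (simp add: cnj_ip[of _ n])
    finally show "mat_adjoint A $$ (i,j) = A $$ (i,j)" .
  qed (use A in \<open>auto simp: mat_adjoint_def\<close>)
  thus ?thesis using A unfolding hermitian_def by auto
qed

lemma hermitian_diff_smult:
  assumes A: "hermitian n A" and M: "hermitian n M"
  shows "hermitian n (A - of_real s \<cdot>\<^sub>m M)"
proof (rule hermitianI)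
  have Ac: "A \<in> carrier_mat n n" and Mc: "M \<in> carrier_mat n n" using A M hermitian_carrier by auto
  then show "A - of_real s \<cdot>\<^sub>m M \<in> carrier_mat n n" by (simp add: minus_carrier_mat)
  fix x y :: "complex vec" assume x: "x \<in> carrier_vec n" and y: "y \<in> carrier_vec n"
  have "ip x ((A - of_real s \<cdot>\<^sub>m M) *\<^sub>v y) = ip x (A *\<^sub>v y) - of_real s * ip x (M *\<^sub>v y)"
    using Ac Mc x y by (simp add: diff_smult_mat_mult_vec ip_minus_right[of _ n] ip_smult_right[of _ n])
  also have "\<dots> = ip (A *\<^sub>v x) y - of_real s * ip (M *\<^sub>v x) y"
    using hermitian_ip[OF A x y] hermitian_ip[OF M x y] by simp
  also have "\<dots> = ip ((A - of_real s \<cdot>\<^sub>m M) *\<^sub>v x) y"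
    using Ac Mc x y by (simp add: diff_smult_mat_mult_vec ip_minus_left[of _ n] ip_smult_left[of _ n])
  finally show "ip x ((A - of_real s \<cdot>\<^sub>m M) *\<^sub>v y) = ip ((A - of_real s \<cdot>\<^sub>m M) *\<^sub>v x) y" .
qed

lemma pos_def_hermitian: "pos_def n T \<Longrightarrow> hermitian n T"
  unfolding pos_def_def by auto

lemma pos_def_carrier: "pos_def n T \<Longrightarrow> T \<in> carrier_mat n n"
  unfolding pos_def_def hermitian_def by auto

lemma pos_def_kernel:
  assumes M: "pos_def n M" and x: "x \<in> carrier_vec n" and Mx: "M *\<^sub>v x = 0\<^sub>v n"
  shows "x = 0\<^sub>v n"
proof (rule ccontr)
  assume "x \<noteq> 0\<^sub>v n"
  hence "Re (ip x (M *\<^sub>v x)) > 0" using M x unfolding pos_def_def by auto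
  thus False using Mx x by (simp add: ip_zero_right)
qed

lemma pos_def_det_nonzero: "pos_def n M \<Longrightarrow> det M \<noteq> 0"
  using det_0_iff_vec_prod_zero[OF pos_def_carrier] pos_def_kernel by blast

lemma pos_def_nonneg: "pos_def n M \<Longrightarrow> x \<in> carrier_vec n \<Longrightarrow> Re (ip x (M *\<^sub>v x)) \<ge> 0"
  unfolding pos_def_def
  by (cases "x = 0\<^sub>v n") (auto simp: ip_zero_left[of _ n] hermitian_def less_imp_le)

section \<open>Finite sums of vectors\<close>

definition vsum :: "nat \<Rightarrow> (nat \<Rightarrow> complex vec) \<Rightarrow> nat set \<Rightarrow> complex vec" where
  "vsum n f K = vec n (\<lambda>i. \<Sum>k\<in>K. f k $ i)"

lemma vsum_carrier[simp]: "vsum n f K \<in> carrier_vec n"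
  and vsum_dim[simp]: "dim_vec (vsum n f K) = n"
  and vsum_index[simp]: "i < n \<Longrightarrow> vsum n f K $ i = (\<Sum>k\<in>K. f k $ i)"
  unfolding vsum_def by auto

lemma vsum_cong: "(\<And>k. k \<in> K \<Longrightarrow> f k = g k) \<Longrightarrow> vsum n f K = vsum n g K"
  unfolding vsum_def by (auto intro!: sum.cong)

lemma vsum_empty: "vsum n f {} = 0\<^sub>v n"
  by (rule eq_vecI) auto

lemma vsum_insert: "finite K \<Longrightarrow> x \<notin> K \<Longrightarrow> f x \<in> carrier_vec n \<Longrightarrow> vsum n f (insert x K) = f x + vsum n f K"
  by (rule eq_vecI) auto

lemma vsum_zero: "vsum n (\<lambda>k. 0\<^sub>v n) K = 0\<^sub>v n"
  by (rule eq_vecI) auto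

lemma vsum_delta:
  assumes k: "k < n" and w: "w \<in> carrier_vec n"
    and f: "\<And>l. l < n \<Longrightarrow> f l = (if l = k then w else 0\<^sub>v n)"
  shows "vsum n f {..<n} = w"
proof (rule eq_vecI)
  fix i assume "i < dim_vec w" hence i: "i < n" using w by auto
  have "vsum n f {..<n} $ i = (\<Sum>l<n. f l $ i)" using i by simp
  also have "\<dots> = (\<Sum>l<n. if l = k then w $ i else 0)"
    using i f by (intro sum.cong refl) simp
  also have "\<dots> = w $ i" using k by simp
  finally show "vsum n f {..<n} $ i = w $ i" .
qed (use w in auto)

lemma mult_mat_vsum:
  assumes A: "A \<in> carrier_mat n n" and f: "\<And>k. k \<in> K \<Longrightarrow> f k \<in> carrier_vec n"
  shows "A *\<^sub>v vsum n f K = vsum n (\<lambda>k. A *\<^sub>v f k) K"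
proof (rule eq_vecI)
  fix i assume "i < dim_vec (vsum n (\<lambda>k. A *\<^sub>v f k) K)"
  hence i: "i < n" by simp
  have "(A *\<^sub>v vsum n f K) $ i = (\<Sum>j<n. \<Sum>k\<in>K. A$$(i,j) * f k $ j)"
    using A i by (simp add: mult_mat_vec_conv_sum sum_distrib_left)
  also have "\<dots> = vsum n (\<lambda>k. A *\<^sub>v f k) K $ i"
    using A i f by (subst sum.swap) (simp add: mult_mat_vec_conv_sum)
  finally show "(A *\<^sub>v vsum n f K) $ i = vsum n (\<lambda>k. A *\<^sub>v f k) K $ i" .
qed (use A in auto)

lemma mult_mat_vsum_smult:
  assumes A: "A \<in> carrier_mat n n" and f: "\<And>k. k \<in> K \<Longrightarrow> f k \<in> carrier_vec n"
  shows "A *\<^sub>v vsum n (\<lambda>k. c k \<cdot>\<^sub>v f k) K = vsum n (\<lambda>k. c k \<cdot>\<^sub>v (A *\<^sub>v f k)) K"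
  using A f by (simp add: mult_mat_vsum mult_mat_vec cong: vsum_cong)

lemma ip_vsum_right:
  assumes u: "u \<in> carrier_vec n" and f: "\<And>k. k \<in> K \<Longrightarrow> f k \<in> carrier_vec n"
  shows "ip u (vsum n f K) = (\<Sum>k\<in>K. ip u (f k))"
proof -
  have "ip u (vsum n f K) = (\<Sum>i<n. \<Sum>k\<in>K. cnj (u$i) * f k $ i)"
    using u by (simp add: ip_conv_sum sum_distrib_left)
  also have "\<dots> = (\<Sum>k\<in>K. ip u (f k))"
    using u f by (subst sum.swap) (simp add: ip_conv_sum[of u n])
  finally show ?thesis .
qed

lemma ip_vsum_left:
  assumes u: "u \<in> carrier_vec n" and f: "\<And>k. k \<in> K \<Longrightarrow> f k \<in> carrier_vec n"
  shows "ip (vsum n f K) u = (\<Sum>k\<in>K. ip (f k) u)"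
proof -
  have "ip (vsum n f K) u = (\<Sum>i<n. \<Sum>k\<in>K. cnj (f k $ i) * u $ i)"
    using u by (simp add: ip_conv_sum[of "vsum n f K" n u] sum_distrib_right cnj_sum)
  also have "\<dots> = (\<Sum>k\<in>K. ip (f k) u)"
    using u f by (subst sum.swap) (simp add: ip_conv_sum[of _ n u])
  finally show ?thesis .
qed

lemma ip_vsum_smult_right:
  assumes "u \<in> carrier_vec n" and "\<And>k. k \<in> K \<Longrightarrow> f k \<in> carrier_vec n"
  shows "ip u (vsum n (\<lambda>k. c k \<cdot>\<^sub>v f k) K) = (\<Sum>k\<in>K. c k * ip u (f k))"
  using assms by (simp add: ip_vsum_right ip_smult_right[of _ n] cong: sum.cong)

lemma ip_vsum_smult_left:
  assumes "u \<in> carrier_vec n" and "\<And>k. k \<in> K \<Longrightarrow> f k \<in> carrier_vec n"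
  shows "ip (vsum n (\<lambda>k. c k \<cdot>\<^sub>v f k) K) u = (\<Sum>k\<in>K. cnj (c k) * ip (f k) u)"
  using assms by (simp add: ip_vsum_left ip_smult_left[of _ n] cong: sum.cong)

definition vspan :: "nat \<Rightarrow> (nat \<Rightarrow> complex vec) \<Rightarrow> nat \<Rightarrow> complex vec set" where
  "vspan n f k = {v. \<exists>a. v = vsum n (\<lambda>l. a l \<cdot>\<^sub>v f l) {..<k}}"

context
  fixes n :: nat and f :: "nat \<Rightarrow> complex vec"
  assumes f: "\<And>l. f l \<in> carrier_vec n"
begin

lemma vspan_carrier: "v \<in> vspan n f k \<Longrightarrow> v \<in> carrier_vec n"
  unfolding vspan_def by auto

lemma vspan_zero: "0\<^sub>v n \<in> vspan n f k"
  unfolding vspan_def by (rule CollectI, rule exI[of _ "\<lambda>_. 0"]) (rule eq_vecI, auto simp: carrier_vecD[OF f])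

lemma vspan_add: "u \<in> vspan n f k \<Longrightarrow> w \<in> vspan n f k \<Longrightarrow> u + w \<in> vspan n f k"
proof -
  assume "u \<in> vspan n f k" "w \<in> vspan n f k"
  then obtain a b where u: "u = vsum n (\<lambda>l. a l \<cdot>\<^sub>v f l) {..<k}" and w: "w = vsum n (\<lambda>l. b l \<cdot>\<^sub>v f l) {..<k}"
    unfolding vspan_def by auto
  have "u + w = vsum n (\<lambda>l. (a l + b l) \<cdot>\<^sub>v f l) {..<k}"
    unfolding u w by (rule eq_vecI) (auto simp: sum.distrib algebra_simps carrier_vecD[OF f])
  thus ?thesis unfolding vspan_def by auto
qed

lemma vspan_smult: "u \<in> vspan n f k \<Longrightarrow> c \<cdot>\<^sub>v u \<in> vspan n f k"
proof -
  assume "u \<in> vspan n f k"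
  then obtain a where u: "u = vsum n (\<lambda>l. a l \<cdot>\<^sub>v f l) {..<k}" unfolding vspan_def by auto
  have "c \<cdot>\<^sub>v u = vsum n (\<lambda>l. (c * a l) \<cdot>\<^sub>v f l) {..<k}"
    unfolding u by (rule eq_vecI) (auto simp: sum_distrib_left algebra_simps carrier_vecD[OF f])
  thus ?thesis unfolding vspan_def by auto
qed

lemma vspan_diff: "u \<in> vspan n f k \<Longrightarrow> w \<in> vspan n f k \<Longrightarrow> u - w \<in> vspan n f k"
proof -
  assume u: "u \<in> vspan n f k" and w: "w \<in> vspan n f k"
  have "u - w = u + (-1) \<cdot>\<^sub>v w" by (rule eq_vecI) (use vspan_carrier[OF u] vspan_carrier[OF w] in auto)
  thus ?thesis using vspan_add[OF u vspan_smult[OF w]] by simp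
qed

lemma vspan_mono: "k \<le> k' \<Longrightarrow> u \<in> vspan n f k \<Longrightarrow> u \<in> vspan n f k'"
proof -
  assume kk: "k \<le> k'" and "u \<in> vspan n f k"
  then obtain a where u: "u = vsum n (\<lambda>l. a l \<cdot>\<^sub>v f l) {..<k}" unfolding vspan_def by auto
  have "u = vsum n (\<lambda>l. (if l < k then a l else 0) \<cdot>\<^sub>v f l) {..<k'}"
  proof (rule eq_vecI)
    fix i assume "i < dim_vec (vsum n (\<lambda>l. (if l < k then a l else 0) \<cdot>\<^sub>v f l) {..<k'})"
    hence i: "i < n" by simp
    have "vsum n (\<lambda>l. (if l < k then a l else 0) \<cdot>\<^sub>v f l) {..<k'} $ i
        = (\<Sum>l\<in>{..<k'} \<inter> {l. l < k}. a l * f l $ i)"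
      using i by (auto intro!: sum.cong simp: carrier_vecD[OF f] sum.inter_restrict if_distrib)
    also have "{..<k'} \<inter> {l. l < k} = {..<k}" using kk by auto
    finally show "u $ i = vsum n (\<lambda>l. (if l < k then a l else 0) \<cdot>\<^sub>v f l) {..<k'} $ i"
      unfolding u using i by (auto simp: carrier_vecD[OF f])
  qed (simp add: u)
  thus ?thesis unfolding vspan_def by (auto intro!: exI[of _ "\<lambda>l. if l < k then a l else 0"])
qed

lemma vspan_generator: "l < k \<Longrightarrow> f l \<in> vspan n f k"
proof -
  assume l: "l < k"
  have "f l = vsum n (\<lambda>m. (if m = l then 1 else 0) \<cdot>\<^sub>v f m) {..<k}"
  proof (rule eq_vecI)
    fix i assume "i < dim_vec (vsum n (\<lambda>m. (if m = l then 1 else 0) \<cdot>\<^sub>v f m) {..<k})"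
    hence i: "i < n" by simp
    have "vsum n (\<lambda>m. (if m = l then 1 else 0) \<cdot>\<^sub>v f m) {..<k} $ i = (\<Sum>m<k. (if m = l then 1 else 0) * f m $ i)"
      using i by (simp add: carrier_vecD[OF f])
    also have "\<dots> = (\<Sum>m<k. if m = l then f l $ i else 0)" by (intro sum.cong refl) auto
    finally show "f l $ i = vsum n (\<lambda>m. (if m = l then 1 else 0) \<cdot>\<^sub>v f m) {..<k} $ i" using l by simp
  qed (simp add: carrier_vecD[OF f])
  thus ?thesis unfolding vspan_def by (auto intro!: exI[of _ "\<lambda>m. if m = l then 1 else 0"])
qed

lemma vspan_vsum:
  assumes "finite K" and "\<And>m. m \<in> K \<Longrightarrow> g m \<in> vspan n f k"
  shows "vsum n g K \<in> vspan n f k"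
  using assms
proof (induction K rule: finite_induct)
  case empty thus ?case using vspan_zero by (simp add: vsum_empty)
next
  case (insert x F)
  have "vsum n g (insert x F) = g x + vsum n g F"
    using insert vspan_carrier by (intro vsum_insert) auto
  thus ?case using insert vspan_add by auto
qed

lemma vspan_orthogonal:
  assumes u: "u \<in> vspan n f k" and z: "z \<in> carrier_vec n" and o: "\<And>l. l < k \<Longrightarrow> ip (f l) z = 0"
  shows "ip u z = 0"
proof -
  obtain a where ue: "u = vsum n (\<lambda>l. a l \<cdot>\<^sub>v f l) {..<k}" using u unfolding vspan_def by auto
  have "ip u z = (\<Sum>l<k. cnj (a l) * ip (f l) z)"
    unfolding ue by (rule ip_vsum_smult_left[OF z]) (use f in auto)
  also have "\<dots> = 0" using o by simp
  finally show ?thesis .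
qed

end

lemma vspan_mult_mat:
  assumes B: "B \<in> carrier_mat n n" and f: "\<And>l. f l \<in> carrier_vec n" and u: "u \<in> vspan n f k"
  obtains a where "B *\<^sub>v u = vsum n (\<lambda>l. a l \<cdot>\<^sub>v (B *\<^sub>v f l)) {..<k}"
proof -
  obtain a where "u = vsum n (\<lambda>l. a l \<cdot>\<^sub>v f l) {..<k}" using u unfolding vspan_def by auto
  thus thesis using that[of a] mult_mat_vsum_smult[OF B, of "{..<k}" f a] f by simp
qed

section \<open>Spectral theorem for Hermitian matrices\<close>

definition mat_trace :: "complex mat \<Rightarrow> complex" where
  "mat_trace A = (\<Sum>i<dim_row A. A$$(i,i))"

lemma mat_trace_mult_comm:
  assumes A: "A \<in> carrier_mat n m" and B: "B \<in> carrier_mat m n"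
  shows "mat_trace (A * B) = mat_trace (B * A)"
proof -
  have "mat_trace (A * B) = (\<Sum>i<n. (A*B)$$(i,i))" unfolding mat_trace_def using A by simp
  also have "\<dots> = (\<Sum>i<n. \<Sum>l<m. A$$(i,l) * B$$(l,i))"
    by (intro sum.cong refl) (rule times_mat_conv_sum[OF A B], auto)
  also have "\<dots> = (\<Sum>l<m. \<Sum>i<n. B$$(l,i) * A$$(i,l))"
    by (subst sum.swap) (simp add: mult.commute)
  also have "\<dots> = (\<Sum>i<m. (B*A)$$(i,i))"
    by (intro sum.cong refl) (rule times_mat_conv_sum[OF B A, symmetric], auto)
  also have "\<dots> = mat_trace (B * A)" unfolding mat_trace_def using B by simp
  finally show ?thesis .
qed

lemma mat_trace_single_eigenvalue:
  fixes G :: "complex mat"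
  assumes G: "G \<in> carrier_mat n n" and all: "\<And>\<nu>. eigenvalue G \<nu> \<Longrightarrow> \<nu> = t"
  shows "mat_trace G = of_nat n * t"
proof -
  obtain as where cp: "char_poly G = (\<Prod>a\<leftarrow>as. [:- a, 1:])" and len: "length as = n"
    using char_poly_factorized[OF G] by blast
  obtain B P Q where sd: "schur_decomposition G as = (B,P,Q)" by (cases "schur_decomposition G as") auto
  from schur_decomposition[OF G cp sd]
  have sim: "similar_mat_wit G B P Q" and dB: "diag_mat B = as" by auto
  have dr: "dim_row G = n" using G by auto
  from sim have C: "B \<in> carrier_mat n n" "P \<in> carrier_mat n n" "Q \<in> carrier_mat n n"
    and QP: "Q * P = 1\<^sub>m n" and GPBQ: "G = P * B * Q"
    unfolding similar_mat_wit_def Let_def dr by auto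
  have "mat_trace G = mat_trace (P * (B * Q))" using GPBQ C by (simp add: assoc_mult_mat[of P n n B n Q n])
  also have "\<dots> = mat_trace ((B * Q) * P)" using C by (intro mat_trace_mult_comm[of _ n n]) auto
  also have "(B * Q) * P = B * (Q * P)" using C by (simp add: assoc_mult_mat[of B n n Q n P n])
  also have "\<dots> = B" using C QP by simp
  also have "mat_trace B = (\<Sum>i<n. as ! i)"
    unfolding mat_trace_def using C dB[symmetric] by (auto simp: diag_mat_def intro!: sum.cong)
  also have "\<dots> = (\<Sum>i<n. t)"
  proof (intro sum.cong refl)
    fix i assume "i \<in> {..<n}"
    hence "as ! i \<in> set as" using len by auto
    hence "poly (char_poly G) (as ! i) = 0"
      unfolding cp poly_prod_list prod_list_zero_iff by force
    thus "as ! i = t" using eigenvalue_root_char_poly[OF G] all by auto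
  qed
  finally show ?thesis by simp
qed

text \<open>Replacing the eigenvalues \<open>\<mu> l\<close> of the orthonormal eigenvectors \<open>u l\<close> (\<open>l < k\<close>)
  of \<open>H\<close> by \<open>t\<close>. If no eigenvector of \<open>H\<close> is orthogonal to all \<open>u l\<close>, then \<open>t\<close> is the only
  eigenvalue of the result, and comparing traces for two values of \<open>t\<close> forces \<open>k = n\<close>.\<close>

definition eigen_shift ::
    "nat \<Rightarrow> complex mat \<Rightarrow> (nat \<Rightarrow> complex vec) \<Rightarrow> (nat \<Rightarrow> real) \<Rightarrow> nat \<Rightarrow> complex \<Rightarrow> complex mat" where
  "eigen_shift n H u \<mu> k t =
     mat n n (\<lambda>(i,j). H$$(i,j) + (\<Sum>l<k. (t - of_real (\<mu> l)) * (u l $ i * cnj (u l $ j))))"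

context
  fixes n k :: nat and H :: "complex mat" and u :: "nat \<Rightarrow> complex vec" and \<mu> :: "nat \<Rightarrow> real"
  assumes h: "hermitian n H"
    and u: "\<And>l. l < k \<Longrightarrow> u l \<in> carrier_vec n"
    and eu: "\<And>l. l < k \<Longrightarrow> H *\<^sub>v u l = of_real (\<mu> l) \<cdot>\<^sub>v u l"
    and on: "\<And>j l. j < k \<Longrightarrow> l < k \<Longrightarrow> ip (u j) (u l) = (if j = l then 1 else 0)"
begin

lemma eigen_shift_mult_vec:
  assumes x: "x \<in> carrier_vec n"
  shows "eigen_shift n H u \<mu> k t *\<^sub>v x = H *\<^sub>v x + vsum n (\<lambda>l. ((t - of_real (\<mu> l)) * ip (u l) x) \<cdot>\<^sub>v u l) {..<k}"
proof (rule eq_vecI)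
  have H: "H \<in> carrier_mat n n" using h hermitian_carrier by auto
  fix i assume "i < dim_vec (H *\<^sub>v x + vsum n (\<lambda>l. ((t - of_real (\<mu> l)) * ip (u l) x) \<cdot>\<^sub>v u l) {..<k})"
  hence i: "i < n" using H by simp
  have "(eigen_shift n H u \<mu> k t *\<^sub>v x) $ i
      = (\<Sum>j<n. (H$$(i,j) + (\<Sum>l<k. (t - of_real (\<mu> l)) * (u l $ i * cnj (u l $ j)))) * x $ j)"
    using i x by (subst mult_mat_vec_conv_sum) (auto simp: eigen_shift_def)
  also have "\<dots> = (\<Sum>j<n. H$$(i,j) * x$j) + (\<Sum>j<n. \<Sum>l<k. (t - of_real (\<mu> l)) * u l $ i * (cnj (u l $ j) * x $ j))"
    by (simp add: distrib_right sum.distrib sum_distrib_right mult.assoc)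
  also have "(\<Sum>j<n. \<Sum>l<k. (t - of_real (\<mu> l)) * u l $ i * (cnj (u l $ j) * x $ j))
      = (\<Sum>l<k. ((t - of_real (\<mu> l)) * ip (u l) x) * u l $ i)"
    using u x by (subst sum.swap) (simp add: ip_conv_sum[of _ n x] sum_distrib_left mult.commute mult.left_commute)
  moreover have "\<And>l. l < k \<Longrightarrow> dim_vec (u l) = n" using u by auto
  ultimately show "(eigen_shift n H u \<mu> k t *\<^sub>v x) $ i
      = (H *\<^sub>v x + vsum n (\<lambda>l. ((t - of_real (\<mu> l)) * ip (u l) x) \<cdot>\<^sub>v u l) {..<k}) $ i"
    using i H x by (auto simp: mult_mat_vec_conv_sum intro!: sum.cong)
qed (auto simp: eigen_shift_def)

lemma eigen_shift_trace: "mat_trace (eigen_shift n H u \<mu> k t) = mat_trace H + (\<Sum>l<k. t - of_real (\<mu> l))"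
proof -
  have H: "H \<in> carrier_mat n n" using h hermitian_carrier by auto
  have norm1: "(\<Sum>i<n. u l $ i * cnj (u l $ i)) = 1" if l: "l < k" for l
    using on[OF l l] u[OF l] by (simp add: ip_conv_sum[of _ n] mult.commute)
  have "mat_trace (eigen_shift n H u \<mu> k t)
      = mat_trace H + (\<Sum>l<k. (t - of_real (\<mu> l)) * (\<Sum>i<n. u l $ i * cnj (u l $ i)))"
    unfolding mat_trace_def eigen_shift_def using H
    by (simp add: sum.distrib sum_distrib_left sum.swap[of _ "{..<n}"])
  thus ?thesis using norm1 by simp
qed

lemma eigen_shift_eigenvalue:
  assumes none: "\<nexists>w \<nu>. w \<in> carrier_vec n \<and> w \<noteq> 0\<^sub>v n \<and> H *\<^sub>v w = \<nu> \<cdot>\<^sub>v w \<and> (\<forall>l<k. ip (u l) w = 0)"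
    and ev: "eigenvalue (eigen_shift n H u \<mu> k t) \<nu>"
  shows "\<nu> = t"
proof (rule ccontr)
  assume ne: "\<nu> \<noteq> t"
  let ?G = "eigen_shift n H u \<mu> k t"
  let ?c = "\<lambda>v l. (t - of_real (\<mu> l)) * ip (u l) v"
  have H: "H \<in> carrier_mat n n" using h hermitian_carrier by auto
  obtain v where v: "v \<in> carrier_vec n" "v \<noteq> 0\<^sub>v n" and Gv: "?G *\<^sub>v v = \<nu> \<cdot>\<^sub>v v"
    using ev unfolding eigenvalue_def eigenvector_def eigen_shift_def by auto
  have orth: "ip (u m) v = 0" if m: "m < k" for m
  proof -
    have "ip (u m) (vsum n (\<lambda>l. ?c v l \<cdot>\<^sub>v u l) {..<k}) = (\<Sum>l<k. ?c v l * ip (u m) (u l))"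
      by (rule ip_vsum_smult_right[OF u[OF m]]) (use u in auto)
    also have "\<dots> = (\<Sum>l<k. if l = m then ?c v l else 0)"
      using m on by (intro sum.cong refl) auto
    finally have "ip (u m) (vsum n (\<lambda>l. ?c v l \<cdot>\<^sub>v u l) {..<k}) = ?c v m" using m by simp
    moreover have "\<nu> * ip (u m) v = ip (u m) (?G *\<^sub>v v)" using Gv u[OF m] v by (simp add: ip_smult_right)
    ultimately have "\<nu> * ip (u m) v = ip (u m) (H *\<^sub>v v) + ?c v m"
      using u[OF m] v H by (simp add: eigen_shift_mult_vec ip_add_right[of _ n])
    also have "ip (u m) (H *\<^sub>v v) = of_real (\<mu> m) * ip (u m) v"
      using hermitian_ip[OF h u[OF m] v(1)] eu[OF m] u[OF m] v by (simp add: ip_smult_left)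
    finally have "\<nu> * ip (u m) v = t * ip (u m) v" by (simp add: algebra_simps)
    thus ?thesis using ne by simp
  qed
  have "vsum n (\<lambda>l. ?c v l \<cdot>\<^sub>v u l) {..<k} = vsum n (\<lambda>l. 0\<^sub>v n) {..<k}"
    using orth u by (intro vsum_cong) (auto simp: zero_smult_vec)
  hence "H *\<^sub>v v = \<nu> \<cdot>\<^sub>v v" using Gv H v by (simp add: eigen_shift_mult_vec vsum_zero)
  thus False using none v orth by blast
qed

lemma hermitian_orthogonal_eigenvector_exists:
  assumes k: "k < n"
  shows "\<exists>w \<nu>. w \<in> carrier_vec n \<and> w \<noteq> 0\<^sub>v n \<and> H *\<^sub>v w = \<nu> \<cdot>\<^sub>v w \<and> (\<forall>l<k. ip (u l) w = 0)"
proof (rule ccontr)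
  assume none: "\<not> ?thesis"
  have "mat_trace (eigen_shift n H u \<mu> k t) = of_nat n * t" for t
    by (rule mat_trace_single_eigenvalue) (auto simp: eigen_shift_def intro: eigen_shift_eigenvalue[OF none])
  hence "of_nat n * t = mat_trace H + (\<Sum>l<k. t - of_real (\<mu> l))" for t
    by (simp add: eigen_shift_trace)
  from this[of 0] this[of 1] have "(of_nat n :: complex) = of_nat k"
    by (simp add: sum_subtractf sum_negf algebra_simps)
  thus False using k by simp
qed

end

lemma hermitian_normalized_eigenvector:
  assumes h: "hermitian n H" and w: "w \<in> carrier_vec n" "w \<noteq> 0\<^sub>v n" and Hw: "H *\<^sub>v w = \<nu> \<cdot>\<^sub>v w"
  defines "w' \<equiv> of_real (1 / sqrt (Re (ip w w))) \<cdot>\<^sub>v w"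
  shows "ip w' w' = 1" and "H *\<^sub>v w' = of_real (Re \<nu>) \<cdot>\<^sub>v w'"
proof -
  define r where "r = Re (ip w w)"
  have r: "r > 0" unfolding r_def using Re_ip_self_pos[OF w] .
  have ww: "ip w w = of_real r" unfolding r_def using Im_ip_self[OF w(1)] by (simp add: complex_eq_iff)
  have "ip w (H *\<^sub>v w) = \<nu> * of_real r" using Hw w ww by (simp add: ip_smult_right)
  hence "Im (\<nu> * of_real r) = 0" using hermitian_form_real(2)[OF h w(1)] by simp
  hence real: "of_real (Re \<nu>) = \<nu>" using r by (simp add: complex_eq_iff)
  define c where "c = 1 / sqrt r"
  have "ip w' w' = of_real (c * c * r)"
    unfolding w'_def r_def[symmetric] c_def[symmetric] using w ww by (simp add: ip_smult_left ip_smult_right)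
  also have "c * c * r = 1" unfolding c_def using r by (simp add: real_sqrt_mult[symmetric])
  finally show "ip w' w' = 1" by simp
  have H: "H \<in> carrier_mat n n" using h hermitian_carrier by auto
  show "H *\<^sub>v w' = of_real (Re \<nu>) \<cdot>\<^sub>v w'"
    unfolding w'_def r_def[symmetric] c_def[symmetric] real using H w Hw by (simp add: mult_mat_vec smult_smult_assoc mult.commute)
qed

definition orthonormal :: "nat \<Rightarrow> (nat \<Rightarrow> complex vec) \<Rightarrow> bool" where
  "orthonormal n u \<longleftrightarrow> (\<forall>k<n. u k \<in> carrier_vec n) \<and> (\<forall>j<n. \<forall>k<n. ip (u j) (u k) = (if j = k then 1 else 0))"

lemma orthonormal_carrier: "orthonormal n u \<Longrightarrow> k < n \<Longrightarrow> u k \<in> carrier_vec n"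
  and orthonormal_ip: "orthonormal n u \<Longrightarrow> j < n \<Longrightarrow> k < n \<Longrightarrow> ip (u j) (u k) = (if j = k then 1 else 0)"
  unfolding orthonormal_def by auto

lemma hermitian_orthonormal_eigenvectors:
  assumes h: "hermitian n H" and "k \<le> n"
  shows "\<exists>u \<mu>. (\<forall>l<k. u l \<in> carrier_vec n \<and> H *\<^sub>v u l = of_real (\<mu> l) \<cdot>\<^sub>v u l) \<and>
     (\<forall>j<k. \<forall>l<k. ip (u j) (u l) = (if j = l then 1 else 0))"
  using \<open>k \<le> n\<close>
proof (induction k)
  case 0 show ?case by auto
next
  case (Suc k)
  then obtain u \<mu> where A: "\<forall>l<k. u l \<in> carrier_vec n \<and> H *\<^sub>v u l = of_real (\<mu> l) \<cdot>\<^sub>v u l"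
    and B: "\<forall>j<k. \<forall>l<k. ip (u j) (u l) = (if j = l then 1 else 0)" by auto
  have u: "\<And>l. l<k \<Longrightarrow> u l \<in> carrier_vec n" using A by auto
  obtain w \<nu> where w: "w \<in> carrier_vec n" "w \<noteq> 0\<^sub>v n" and Hw: "H *\<^sub>v w = \<nu> \<cdot>\<^sub>v w"
    and wo: "\<And>l. l<k \<Longrightarrow> ip (u l) w = 0"
    using hermitian_orthogonal_eigenvector_exists[of n H k u \<mu>] h A B Suc.prems by auto
  define w' where "w' = of_real (1 / sqrt (Re (ip w w))) \<cdot>\<^sub>v w"
  have w'c: "w' \<in> carrier_vec n" unfolding w'_def using w by simp
  note w' = hermitian_normalized_eigenvector[OF h w Hw, folded w'_def]
  have w'o: "ip (u l) w' = 0" "ip w' (u l) = 0" if "l < k" for l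
  proof -
    show "ip (u l) w' = 0" unfolding w'_def using wo[OF that] u[OF that] w by (simp add: ip_smult_right)
    thus "ip w' (u l) = 0" using cnj_ip[OF u[OF that] w'c] by simp
  qed
  show ?case
    by (rule exI[of _ "u(k := w')"], rule exI[of _ "\<mu>(k := Re \<nu>)"])
      (use A B w'c w' w'o in \<open>auto simp: less_Suc_eq\<close>)
qed

lemma hermitian_spectral:
  assumes "hermitian n H"
  shows "\<exists>u \<mu>. orthonormal n u \<and> (\<forall>k<n. H *\<^sub>v u k = of_real (\<mu> k) \<cdot>\<^sub>v u k)"
  using hermitian_orthonormal_eigenvectors[OF assms le_refl] unfolding orthonormal_def by blast

lemma M_orthonormal_coeff:
  assumes M: "M \<in> carrier_mat n n" and v: "\<And>k. k < n \<Longrightarrow> v k \<in> carrier_vec n"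
    and x: "x \<in> carrier_vec n" and k: "k < n"
  shows "(mat n n (\<lambda>(k,i). \<Sum>l<n. cnj (v k $ l) * M$$(l,i)) *\<^sub>v x) $ k = ip (v k) (M *\<^sub>v x)"
proof -
  have "(mat n n (\<lambda>(k,i). \<Sum>l<n. cnj (v k $ l) * M$$(l,i)) *\<^sub>v x) $ k
      = (\<Sum>i<n. (\<Sum>l<n. cnj (v k $ l) * M$$(l,i)) * x $ i)"
    using mult_mat_vec_conv_sum[of "mat n n (\<lambda>(k,i). \<Sum>l<n. cnj (v k $ l) * M$$(l,i))" n x k] x k by simp
  also have "\<dots> = (\<Sum>i<n. \<Sum>l<n. cnj (v k $ l) * (M$$(l,i) * x $ i))"
    by (simp add: sum_distrib_right mult.assoc)
  also have "\<dots> = ip (v k) (M *\<^sub>v x)"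
    using v[OF k] x M by (subst sum.swap) (simp add: ip_conv_sum[of _ n] mult_mat_vec_conv_sum sum_distrib_left)
  finally show ?thesis .
qed

lemma M_orthonormal_expansion:
  assumes M: "M \<in> carrier_mat n n" and v: "\<And>k. k < n \<Longrightarrow> v k \<in> carrier_vec n"
    and on: "\<And>j k. j < n \<Longrightarrow> k < n \<Longrightarrow> ip (v j) (M *\<^sub>v v k) = (if j = k then 1 else 0)"
    and x: "x \<in> carrier_vec n"
  shows "x = vsum n (\<lambda>k. ip (v k) (M *\<^sub>v x) \<cdot>\<^sub>v v k) {..<n}"
proof -
  define V where "V = mat n n (\<lambda>(i,k). v k $ i)"
  define W where "W = mat n n (\<lambda>(k,i). \<Sum>l<n. cnj (v k $ l) * M$$(l,i))"
  have V: "V \<in> carrier_mat n n" and W: "W \<in> carrier_mat n n" unfolding V_def W_def by auto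
  have Wx: "(W *\<^sub>v y) $ k = ip (v k) (M *\<^sub>v y)" if "y \<in> carrier_vec n" "k < n" for y k
    unfolding W_def using M_orthonormal_coeff[OF M v that] .
  have WV: "W * V = 1\<^sub>m n"
  proof (rule eq_matI)
    fix j k assume "j < dim_row (1\<^sub>m n :: complex mat)" "k < dim_col (1\<^sub>m n :: complex mat)"
    hence j: "j < n" and k: "k < n" by auto
    have "col V k = v k" using v[OF k] k unfolding V_def by (auto simp: carrier_vecD)
    hence "(W * V) $$ (j,k) = (W *\<^sub>v v k) $ j" using W V j k by simp
    thus "(W * V) $$ (j,k) = 1\<^sub>m n $$ (j,k)" using Wx[OF v[OF k] j] on[OF j k] j k by simp
  qed (use W V in auto)
  have "x = (V * W) *\<^sub>v x" using mat_mult_left_right_inverse[OF W V WV] x by simp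
  also have "\<dots> = V *\<^sub>v (W *\<^sub>v x)" using V W x by simp
  also have "\<dots> = vsum n (\<lambda>k. ip (v k) (M *\<^sub>v x) \<cdot>\<^sub>v v k) {..<n}"
  proof (rule eq_vecI)
    fix i assume "i < dim_vec (vsum n (\<lambda>k. ip (v k) (M *\<^sub>v x) \<cdot>\<^sub>v v k) {..<n})"
    hence i: "i < n" by simp
    have "(V *\<^sub>v (W *\<^sub>v x)) $ i = (\<Sum>k<n. v k $ i * (W *\<^sub>v x) $ k)"
      using mult_mat_vec_conv_sum[OF V _ i, of "W *\<^sub>v x"] W x i by (simp add: V_def)
    also have "\<dots> = (\<Sum>k<n. ip (v k) (M *\<^sub>v x) * v k $ i)" using Wx[OF x] by (simp add: mult.commute)
    finally show "(V *\<^sub>v (W *\<^sub>v x)) $ i = vsum n (\<lambda>k. ip (v k) (M *\<^sub>v x) \<cdot>\<^sub>v v k) {..<n} $ i"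
      using i v by (simp add: carrier_vecD[OF v])
  qed (use V in auto)
  finally show ?thesis .
qed

lemma orthonormal_expansion:
  assumes "orthonormal n u" "x \<in> carrier_vec n"
  shows "x = vsum n (\<lambda>k. ip (u k) x \<cdot>\<^sub>v u k) {..<n}"
  using M_orthonormal_expansion[of "1\<^sub>m n" n u x] assms by (simp add: orthonormal_def)

lemma orthonormal_nonzero_coeff:
  assumes u: "orthonormal n u" and x: "x \<in> carrier_vec n" and nz: "x \<noteq> 0\<^sub>v n"
  shows "\<exists>k<n. ip (u k) x \<noteq> 0"
proof (rule ccontr)
  assume "\<not> ?thesis"
  hence "vsum n (\<lambda>k. ip (u k) x \<cdot>\<^sub>v u k) {..<n} = vsum n (\<lambda>k. 0\<^sub>v n) {..<n}"
    using u by (intro vsum_cong) (auto simp: orthonormal_carrier zero_smult_vec)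
  thus False using orthonormal_expansion[OF u x] nz by (simp add: vsum_zero)
qed

lemma mat_eq_on_orthonormal:
  assumes A: "A \<in> carrier_mat n n" and B: "B \<in> carrier_mat n n" and u: "orthonormal n u"
    and eq: "\<And>k. k < n \<Longrightarrow> A *\<^sub>v u k = B *\<^sub>v u k"
  shows "A = B"
proof (rule mat_eqI_mult_vec[OF A B])
  fix x :: "complex vec" assume x: "x \<in> carrier_vec n"
  have uc: "\<And>k. k \<in> {..<n} \<Longrightarrow> u k \<in> carrier_vec n" using u by (auto simp: orthonormal_carrier)
  note xe = orthonormal_expansion[OF u x]
  have "A *\<^sub>v x = vsum n (\<lambda>k. ip (u k) x \<cdot>\<^sub>v (A *\<^sub>v u k)) {..<n}"
    by (subst xe, rule mult_mat_vsum_smult[OF A uc])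
  also have "\<dots> = vsum n (\<lambda>k. ip (u k) x \<cdot>\<^sub>v (B *\<^sub>v u k)) {..<n}"
    using eq by (intro vsum_cong) auto
  also have "\<dots> = B *\<^sub>v x"
    by (subst (2) xe, rule mult_mat_vsum_smult[OF B uc, symmetric])
  finally show "A *\<^sub>v x = B *\<^sub>v x" .
qed

section \<open>Functions of a Hermitian matrix\<close>

definition spectral_mat :: "nat \<Rightarrow> (nat \<Rightarrow> complex vec) \<Rightarrow> (nat \<Rightarrow> real) \<Rightarrow> complex mat" where
  "spectral_mat n u f = mat n n (\<lambda>(i,j). \<Sum>k<n. of_real (f k) * (u k $ i * cnj (u k $ j)))"

lemma spectral_mat_carrier[simp]: "spectral_mat n u f \<in> carrier_mat n n"
  unfolding spectral_mat_def by auto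

lemma spectral_mat_cong: "(\<And>k. k < n \<Longrightarrow> f k = g k) \<Longrightarrow> spectral_mat n u f = spectral_mat n u g"
  unfolding spectral_mat_def by (intro eq_matI) (auto intro!: sum.cong)

lemma spectral_mat_mult_vec:
  assumes u: "orthonormal n u" and x: "x \<in> carrier_vec n"
  shows "spectral_mat n u f *\<^sub>v x = vsum n (\<lambda>k. (of_real (f k) * ip (u k) x) \<cdot>\<^sub>v u k) {..<n}"
proof (rule eq_vecI)
  fix i assume "i < dim_vec (vsum n (\<lambda>k. (of_real (f k) * ip (u k) x) \<cdot>\<^sub>v u k) {..<n})"
  hence i: "i < n" by simp
  have "(spectral_mat n u f *\<^sub>v x) $ i = (\<Sum>j<n. \<Sum>k<n. of_real (f k) * u k $ i * (cnj (u k $ j) * x $ j))"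
    using i x by (subst mult_mat_vec_conv_sum[OF spectral_mat_carrier])
      (auto simp: spectral_mat_def sum_distrib_right mult.assoc)
  also have "\<dots> = (\<Sum>k<n. (of_real (f k) * ip (u k) x) * u k $ i)"
    using u x by (subst sum.swap) (simp add: ip_conv_sum[of _ n x] orthonormal_carrier sum_distrib_left
        mult.commute mult.left_commute)
  finally show "(spectral_mat n u f *\<^sub>v x) $ i = vsum n (\<lambda>k. (of_real (f k) * ip (u k) x) \<cdot>\<^sub>v u k) {..<n} $ i"
    using i by (simp add: carrier_vecD[OF orthonormal_carrier[OF u]])
qed (simp add: spectral_mat_def)

lemma spectral_mat_eigen:
  assumes u: "orthonormal n u" and k: "k < n"
  shows "spectral_mat n u f *\<^sub>v u k = of_real (f k) \<cdot>\<^sub>v u k"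
  unfolding spectral_mat_mult_vec[OF u orthonormal_carrier[OF u k]]
  using u k by (intro vsum_delta) (auto simp: orthonormal_ip orthonormal_carrier zero_smult_vec)

lemma spectral_mat_eq:
  assumes T: "T \<in> carrier_mat n n" and u: "orthonormal n u"
    and e: "\<And>k. k < n \<Longrightarrow> T *\<^sub>v u k = of_real (t k) \<cdot>\<^sub>v u k"
  shows "T = spectral_mat n u t"
  using e spectral_mat_eigen[OF u] by (intro mat_eq_on_orthonormal[OF T spectral_mat_carrier u]) auto

lemma spectral_mat_mult:
  assumes u: "orthonormal n u"
  shows "spectral_mat n u f * spectral_mat n u g = spectral_mat n u (\<lambda>k. f k * g k)"
proof (rule mat_eq_on_orthonormal[OF _ spectral_mat_carrier u])
  show "spectral_mat n u f * spectral_mat n u g \<in> carrier_mat n n"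
    using mult_carrier_mat[OF spectral_mat_carrier spectral_mat_carrier] .
  fix k assume k: "k < n"
  have uc: "u k \<in> carrier_vec n" using orthonormal_carrier[OF u k] .
  have "(spectral_mat n u f * spectral_mat n u g) *\<^sub>v u k = spectral_mat n u f *\<^sub>v (spectral_mat n u g *\<^sub>v u k)"
    using uc by (simp add: assoc_mult_mat_vec[of _ n n _ n])
  also have "\<dots> = of_real (f k * g k) \<cdot>\<^sub>v u k"
    using uc by (simp add: spectral_mat_eigen[OF u k] mult_mat_vec[of _ n n] smult_smult_assoc mult.commute)
  finally show "(spectral_mat n u f * spectral_mat n u g) *\<^sub>v u k = spectral_mat n u (\<lambda>k. f k * g k) *\<^sub>v u k"
    using spectral_mat_eigen[OF u k] by simp
qed

lemma spectral_mat_one: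
  assumes u: "orthonormal n u" and f: "\<And>k. k < n \<Longrightarrow> f k = 1"
  shows "spectral_mat n u f = 1\<^sub>m n"
  using spectral_mat_eq[OF one_carrier_mat u, of f] f orthonormal_carrier[OF u] by simp

lemma spectral_mat_inverse:
  assumes u: "orthonormal n u" and f: "\<And>k. k < n \<Longrightarrow> f k \<noteq> 0"
  shows "spectral_mat n u f * spectral_mat n u (\<lambda>k. 1 / f k) = 1\<^sub>m n"
    and "spectral_mat n u (\<lambda>k. 1 / f k) * spectral_mat n u f = 1\<^sub>m n"
  using f by (simp_all add: spectral_mat_mult[OF u] spectral_mat_one[OF u])

lemma spectral_mat_hermitian: "hermitian n (spectral_mat n u f)"
proof -
  have "mat_adjoint (spectral_mat n u f) = spectral_mat n u f"
  proof (rule eq_matI)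
    fix i j assume "i < dim_row (spectral_mat n u f)" "j < dim_col (spectral_mat n u f)"
    then show "mat_adjoint (spectral_mat n u f) $$ (i,j) = spectral_mat n u f $$ (i,j)"
      unfolding mat_adjoint_def
      by (simp add: spectral_mat_def mat_of_rows_def cnj_sum mult.commute mult.left_commute)
  qed (auto simp: mat_adjoint_def spectral_mat_def)
  thus ?thesis unfolding hermitian_def by (auto simp: spectral_mat_def)
qed

lemma spectral_mat_form:
  assumes u: "orthonormal n u" and x: "x \<in> carrier_vec n"
  shows "ip x (spectral_mat n u f *\<^sub>v x) = of_real (\<Sum>k<n. f k * (cmod (ip (u k) x))\<^sup>2)"
proof -
  have "ip x (spectral_mat n u f *\<^sub>v x) = (\<Sum>k<n. (of_real (f k) * ip (u k) x) * ip x (u k))"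
    unfolding spectral_mat_mult_vec[OF u x]
    by (rule ip_vsum_smult_right[OF x]) (use u in \<open>auto simp: orthonormal_carrier\<close>)
  also have "\<dots> = (\<Sum>k<n. of_real (f k * (cmod (ip (u k) x))\<^sup>2))"
  proof (intro sum.cong refl)
    fix k assume "k \<in> {..<n}"
    hence "ip x (u k) = cnj (ip (u k) x)" using cnj_ip[OF orthonormal_carrier[OF u] x] by simp
    moreover have "ip (u k) x * cnj (ip (u k) x) = of_real ((cmod (ip (u k) x))\<^sup>2)"
      by (rule complex_norm_square[symmetric])
    ultimately show "(of_real (f k) * ip (u k) x) * ip x (u k) = of_real (f k * (cmod (ip (u k) x))\<^sup>2)"
      by (simp only: mult.assoc of_real_mult)
  qed
  finally show ?thesis by simp
qed

lemma spectral_mat_pos_def: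
  assumes u: "orthonormal n u" and f: "\<And>k. k < n \<Longrightarrow> f k > 0"
  shows "pos_def n (spectral_mat n u f)"
  unfolding pos_def_def
proof (intro conjI ballI impI spectral_mat_hermitian)
  fix x :: "complex vec" assume x: "x \<in> carrier_vec n" and nz: "x \<noteq> 0\<^sub>v n"
  obtain k where k: "k < n" "ip (u k) x \<noteq> 0" using orthonormal_nonzero_coeff[OF u x nz] by auto
  have "(\<Sum>k<n. f k * (cmod (ip (u k) x))\<^sup>2) > 0"
  proof (rule sum_pos2[of "{..<n}" k])
    fix i assume "i \<in> {..<n}"
    hence "f i \<ge> 0" using f by (simp add: less_imp_le)
    thus "0 \<le> f i * (cmod (ip (u i) x))\<^sup>2" by simp
  qed (use f k in auto)
  thus "Re (ip x (spectral_mat n u f *\<^sub>v x)) > 0" using spectral_mat_form[OF u x] by simp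
qed

lemma pos_def_eigenvalue_pos:
  assumes T: "pos_def n T" and u: "orthonormal n u" and k: "k < n"
    and e: "T *\<^sub>v u k = of_real t \<cdot>\<^sub>v u k"
  shows "t > 0"
proof -
  have uc: "u k \<in> carrier_vec n" using orthonormal_carrier[OF u k] .
  have "u k \<noteq> 0\<^sub>v n" using orthonormal_ip[OF u k k] ip_zero_left[OF uc] by auto
  hence "Re (ip (u k) (T *\<^sub>v u k)) > 0" using T uc unfolding pos_def_def by auto
  thus ?thesis using e uc orthonormal_ip[OF u k k] by (simp add: ip_smult_right)
qed

lemma pos_def_sqrt_unique:
  assumes T: "T \<in> carrier_mat n n" and u: "orthonormal n u"
    and e: "\<And>k. k < n \<Longrightarrow> T *\<^sub>v u k = of_real (t k) \<cdot>\<^sub>v u k" and tnn: "\<And>k. k < n \<Longrightarrow> t k \<ge> 0"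
    and S: "pos_def n S" and SS: "S * S = T"
  shows "S = spectral_mat n u (\<lambda>k. sqrt (t k))"
proof (rule mat_eq_on_orthonormal[OF pos_def_carrier[OF S] spectral_mat_carrier u])
  fix k assume k: "k < n"
  have Sc: "S \<in> carrier_mat n n" using pos_def_carrier[OF S] .
  have uc: "u k \<in> carrier_vec n" using orthonormal_carrier[OF u k] .
  define s where "s = sqrt (t k)"
  have ss: "s * s = t k" and s0: "s \<ge> 0" unfolding s_def using tnn[OF k] by simp_all
  define z where "z = S *\<^sub>v u k - of_real s \<cdot>\<^sub>v u k"
  have zc: "z \<in> carrier_vec n" unfolding z_def using Sc uc by simp
  have SSu: "S *\<^sub>v (S *\<^sub>v u k) = of_real (t k) \<cdot>\<^sub>v u k"
    using e[OF k] SS Sc uc by (metis assoc_mult_mat_vec)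
  txt \<open>\<open>z\<close> would be an eigenvector of \<open>S\<close> for the eigenvalue \<open>-s \<le> 0\<close>.\<close>
  have Sz: "S *\<^sub>v z = (- of_real s) \<cdot>\<^sub>v z"
  proof -
    have "S *\<^sub>v z = S *\<^sub>v (S *\<^sub>v u k) - of_real s \<cdot>\<^sub>v (S *\<^sub>v u k)"
      unfolding z_def using Sc uc by (simp add: mult_minus_distrib_mat_vec[of S n n] mult_mat_vec)
    also have "\<dots> = (- of_real s) \<cdot>\<^sub>v z" unfolding SSu z_def
      by (rule eq_vecI) (use Sc uc ss in \<open>auto simp: algebra_simps of_real_mult[symmetric]\<close>)
    finally show ?thesis .
  qed
  have "z = 0\<^sub>v n"
  proof (rule ccontr)
    assume nz: "z \<noteq> 0\<^sub>v n"
    have "Re (ip z (S *\<^sub>v z)) > 0" using S zc nz unfolding pos_def_def by auto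
    moreover have "Re (ip z (S *\<^sub>v z)) = - s * Re (ip z z)" using Sz zc by (simp add: ip_smult_right)
    ultimately show False using s0 Re_ip_self_nonneg[OF zc] mult_nonneg_nonneg[of s "Re (ip z z)"] by linarith
  qed
  have "S *\<^sub>v u k = of_real s \<cdot>\<^sub>v u k"
  proof (rule eq_vecI)
    fix i assume "i < dim_vec (of_real s \<cdot>\<^sub>v u k)"
    hence "i < n" using uc by simp
    hence "z $ i = 0" using \<open>z = 0\<^sub>v n\<close> by simp
    thus "(S *\<^sub>v u k) $ i = (of_real s \<cdot>\<^sub>v u k) $ i" unfolding z_def using \<open>i < n\<close> Sc uc by simp
  qed (use Sc uc in auto)
  thus "S *\<^sub>v u k = spectral_mat n u (\<lambda>k. sqrt (t k)) *\<^sub>v u k"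
    using spectral_mat_eigen[OF u k] unfolding s_def by simp
qed

lemma msqrt_spectral_mat:
  assumes T: "pos_def n T" and u: "orthonormal n u"
    and e: "\<And>k. k < n \<Longrightarrow> T *\<^sub>v u k = of_real (t k) \<cdot>\<^sub>v u k"
  shows "msqrt n T = spectral_mat n u (\<lambda>k. sqrt (t k))"
  unfolding msqrt_def
proof (rule the_equality)
  have tp: "\<And>k. k < n \<Longrightarrow> t k > 0" using pos_def_eigenvalue_pos[OF T u _ e] .
  have Tc: "T \<in> carrier_mat n n" using pos_def_carrier[OF T] .
  let ?S = "spectral_mat n u (\<lambda>k. sqrt (t k))"
  show "pos_def n ?S \<and> ?S * ?S = T"
  proof
    show "pos_def n ?S" using tp by (intro spectral_mat_pos_def[OF u]) auto
    have "?S * ?S = spectral_mat n u t"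
      unfolding spectral_mat_mult[OF u] using tp by (intro spectral_mat_cong) (simp add: less_imp_le)
    thus "?S * ?S = T" using spectral_mat_eq[OF Tc u e] by simp
  qed
  fix S assume "pos_def n S \<and> S * S = T"
  thus "S = ?S" using pos_def_sqrt_unique[OF Tc u e] tp by (auto intro: less_imp_le)
qed

lemma msqrt_inverse_exists:
  assumes T: "pos_def n T"
  obtains Si where "hermitian n (msqrt n T)" "hermitian n Si"
    "msqrt n T * msqrt n T = T" "msqrt n T * Si = 1\<^sub>m n" "Si * msqrt n T = 1\<^sub>m n"
    "pos_def n (Si * Si)" "T * (Si * Si) = 1\<^sub>m n"
proof -
  obtain u t where u: "orthonormal n u" and e: "\<And>k. k < n \<Longrightarrow> T *\<^sub>v u k = of_real (t k) \<cdot>\<^sub>v u k"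
    using hermitian_spectral[OF pos_def_hermitian[OF T]] by blast
  have tp: "\<And>k. k < n \<Longrightarrow> t k > 0" using pos_def_eigenvalue_pos[OF T u _ e] .
  have t0: "\<And>k. k < n \<Longrightarrow> t k \<noteq> 0" using tp by (metis less_irrefl)
  hence sq: "\<And>k. k < n \<Longrightarrow> sqrt (t k) \<noteq> 0" by simp
  have S: "msqrt n T = spectral_mat n u (\<lambda>k. sqrt (t k))" using msqrt_spectral_mat[OF T u e] .
  have T_eq: "T = spectral_mat n u t" using spectral_mat_eq[OF pos_def_carrier[OF T] u e] .
  define Si where "Si = spectral_mat n u (\<lambda>k. 1 / sqrt (t k))"
  have SiSi: "Si * Si = spectral_mat n u (\<lambda>k. 1 / t k)"
    unfolding Si_def spectral_mat_mult[OF u] using tp by (intro spectral_mat_cong) (simp add: less_imp_le)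
  show thesis
  proof (rule that[of Si])
    have "msqrt n T * msqrt n T = spectral_mat n u t"
      unfolding S spectral_mat_mult[OF u] using tp by (intro spectral_mat_cong) (simp add: less_imp_le)
    then show "msqrt n T * msqrt n T = T" using T_eq by simp
    show "pos_def n (Si * Si)" unfolding SiSi using tp by (intro spectral_mat_pos_def[OF u]) simp
    show "T * (Si * Si) = 1\<^sub>m n" unfolding SiSi T_eq using spectral_mat_inverse(1)[OF u t0] .
  qed (use spectral_mat_inverse[OF u sq] in \<open>simp_all add: S Si_def spectral_mat_hermitian\<close>)
qed

section \<open>Eigenbases of a Hermitian pencil\<close>

definition pencil_basis ::
    "nat \<Rightarrow> complex mat \<Rightarrow> complex mat \<Rightarrow> (nat \<Rightarrow> complex vec) \<Rightarrow> (nat \<Rightarrow> real) \<Rightarrow> bool" where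
  "pencil_basis n A M v d \<longleftrightarrow>
     (\<forall>k<n. v k \<in> carrier_vec n \<and> A *\<^sub>v v k = of_real (d k) \<cdot>\<^sub>v (M *\<^sub>v v k)) \<and>
     (\<forall>j<n. \<forall>k<n. ip (v j) (M *\<^sub>v v k) = (if j = k then 1 else 0))"

lemma pencil_basis_carrier: "pencil_basis n A M v d \<Longrightarrow> k < n \<Longrightarrow> v k \<in> carrier_vec n"
  and pencil_basis_eigen: "pencil_basis n A M v d \<Longrightarrow> k < n \<Longrightarrow> A *\<^sub>v v k = of_real (d k) \<cdot>\<^sub>v (M *\<^sub>v v k)"
  and pencil_basis_orthonormal: "pencil_basis n A M v d \<Longrightarrow> j < n \<Longrightarrow> k < n \<Longrightarrow>
    ip (v j) (M *\<^sub>v v k) = (if j = k then 1 else 0)"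
  unfolding pencil_basis_def by auto

text \<open>With \<open>L = M\<^sup>1\<^sup>/\<^sup>2\<close>, the \<open>M\<close>-orthonormal eigenvectors of the pencil are \<open>L\<^sup>-\<^sup>1 w\<close> for an
  orthonormal eigenbasis \<open>w\<close> of the Hermitian matrix \<open>L\<^sup>-\<^sup>1 A L\<^sup>-\<^sup>1\<close>.\<close>

lemma pencil_basis_exists:
  assumes A: "hermitian n A" and M: "pos_def n M"
  shows "\<exists>v d. pencil_basis n A M v d"
proof -
  have Ac: "A \<in> carrier_mat n n" using hermitian_carrier[OF A] .
  define L where "L = msqrt n M"
  obtain Li where Lh: "hermitian n L" and Lih: "hermitian n Li" and LL: "L * L = M"
    and LLi: "L * Li = 1\<^sub>m n" and LiL: "Li * L = 1\<^sub>m n"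
    using msqrt_inverse_exists[OF M] unfolding L_def[symmetric] by metis
  have Lc: "L \<in> carrier_mat n n" and Lic: "Li \<in> carrier_mat n n"
    using Lh Lih hermitian_carrier by auto
  have cancel: "L *\<^sub>v (Li *\<^sub>v y) = y" "Li *\<^sub>v (L *\<^sub>v y) = y" if "y \<in> carrier_vec n" for y
    using that Lc Lic LLi LiL by (metis assoc_mult_mat_vec one_mult_mat_vec)+
  define B where "B = Li * A * Li"
  have Bc: "B \<in> carrier_mat n n" unfolding B_def using Lic Ac by simp
  have Bv: "B *\<^sub>v x = Li *\<^sub>v (A *\<^sub>v (Li *\<^sub>v x))" if "x \<in> carrier_vec n" for x
    unfolding B_def using that Lic Ac by (simp add: assoc_mult_mat_vec[of _ n n _ n])
  have Bh: "hermitian n B"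
  proof (rule hermitianI[OF Bc])
    fix x y :: "complex vec" assume x: "x \<in> carrier_vec n" and y: "y \<in> carrier_vec n"
    show "ip x (B *\<^sub>v y) = ip (B *\<^sub>v x) y"
      using x y Lic Ac by (simp add: Bv hermitian_ip[OF Lih] hermitian_ip[OF A])
  qed
  obtain w e where w: "orthonormal n w" and ew: "\<And>k. k < n \<Longrightarrow> B *\<^sub>v w k = of_real (e k) \<cdot>\<^sub>v w k"
    using hermitian_spectral[OF Bh] by blast
  define v where "v k = Li *\<^sub>v w k" for k
  have wc: "\<And>k. k < n \<Longrightarrow> w k \<in> carrier_vec n" using orthonormal_carrier[OF w] .
  have vc: "\<And>k. k < n \<Longrightarrow> v k \<in> carrier_vec n" unfolding v_def using Lic wc by simp
  have Mv: "M *\<^sub>v v k = L *\<^sub>v w k" if k: "k < n" for k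
    unfolding v_def LL[symmetric] using Lc Lic wc[OF k] cancel by (simp add: assoc_mult_mat_vec[of _ n n _ n])
  have Av: "A *\<^sub>v v k = of_real (e k) \<cdot>\<^sub>v (M *\<^sub>v v k)" if k: "k < n" for k
  proof -
    have "A *\<^sub>v v k = L *\<^sub>v (B *\<^sub>v w k)" using Ac Lic wc[OF k] cancel Bv unfolding v_def by simp
    thus ?thesis using ew[OF k] Lc wc[OF k] Mv[OF k] by (simp add: mult_mat_vec)
  qed
  have on: "ip (v j) (M *\<^sub>v v k) = (if j = k then 1 else 0)" if j: "j < n" and k: "k < n" for j k
  proof -
    have "ip (v j) (M *\<^sub>v v k) = ip (Li *\<^sub>v w j) (L *\<^sub>v w k)" unfolding Mv[OF k] by (simp only: v_def)
    also have "\<dots> = ip (w j) (Li *\<^sub>v (L *\<^sub>v w k))"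
      using hermitian_ip[OF Lih wc[OF j], of "L *\<^sub>v w k"] Lc wc[OF k] by simp
    finally show ?thesis using cancel(2)[OF wc[OF k]] orthonormal_ip[OF w j k] by simp
  qed
  show ?thesis unfolding pencil_basis_def using vc Av on by blast
qed

lemma pencil_basis_shifted_eigen:
  assumes p: "pencil_basis n A M v d" and A: "A \<in> carrier_mat n n" and M: "M \<in> carrier_mat n n" and k: "k < n"
  shows "(A - of_real s \<cdot>\<^sub>m M) *\<^sub>v v k = of_real (d k - s) \<cdot>\<^sub>v (M *\<^sub>v v k)"
proof -
  have vk: "v k \<in> carrier_vec n" using pencil_basis_carrier[OF p k] .
  have "(A - of_real s \<cdot>\<^sub>m M) *\<^sub>v v k = A *\<^sub>v v k - of_real s \<cdot>\<^sub>v (M *\<^sub>v v k)"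
    by (rule diff_smult_mat_mult_vec[OF A M vk])
  also have "\<dots> = of_real (d k - s) \<cdot>\<^sub>v (M *\<^sub>v v k)" unfolding pencil_basis_eigen[OF p k]
    by (rule eq_vecI) (use M vk in \<open>auto simp: algebra_simps\<close>)
  finally show ?thesis .
qed

lemma pencil_basis_nonzero:
  assumes p: "pencil_basis n A M v d" and M: "M \<in> carrier_mat n n" and k: "k < n"
  shows "v k \<noteq> 0\<^sub>v n"
  using pencil_basis_orthonormal[OF p k k] M by (auto simp: ip_zero_left[of _ n])

lemma pencil_basis_expansion:
  assumes p: "pencil_basis n A M v d" and M: "M \<in> carrier_mat n n" and x: "x \<in> carrier_vec n"
  shows "x = vsum n (\<lambda>k. ip (v k) (M *\<^sub>v x) \<cdot>\<^sub>v v k) {..<n}"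
  using p M x by (intro M_orthonormal_expansion) (auto simp: pencil_basis_carrier pencil_basis_orthonormal)

lemma pencil_basis_nonzero_coord:
  assumes p: "pencil_basis n A M v d" and M: "M \<in> carrier_mat n n"
    and x: "x \<in> carrier_vec n" and nz: "x \<noteq> 0\<^sub>v n"
  shows "\<exists>k<n. ip (v k) (M *\<^sub>v x) \<noteq> 0"
proof (rule ccontr)
  assume "\<not> ?thesis"
  hence "vsum n (\<lambda>k. ip (v k) (M *\<^sub>v x) \<cdot>\<^sub>v v k) {..<n} = vsum n (\<lambda>k. 0\<^sub>v n) {..<n}"
    using pencil_basis_carrier[OF p] by (intro vsum_cong) (auto simp: zero_smult_vec)
  thus False using pencil_basis_expansion[OF p M x] nz by (simp add: vsum_zero)
qed

lemma pencil_basis_coord: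
  assumes p: "pencil_basis n A M v d" and M: "M \<in> carrier_mat n n" and j: "j < n"
  shows "ip (v j) (M *\<^sub>v vsum n (\<lambda>k. a k \<cdot>\<^sub>v v k) {..<n}) = a j"
proof -
  have vc: "\<And>k. k \<in> {..<n} \<Longrightarrow> v k \<in> carrier_vec n" using pencil_basis_carrier[OF p] by auto
  have "ip (v j) (M *\<^sub>v vsum n (\<lambda>k. a k \<cdot>\<^sub>v v k) {..<n}) = ip (v j) (vsum n (\<lambda>k. a k \<cdot>\<^sub>v (M *\<^sub>v v k)) {..<n})"
    using mult_mat_vsum_smult[of M n "{..<n}" v, OF M vc] by simp
  also have "\<dots> = (\<Sum>k<n. a k * ip (v j) (M *\<^sub>v v k))"
    by (rule ip_vsum_smult_right[OF pencil_basis_carrier[OF p j]]) (use vc M in auto)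
  also have "\<dots> = (\<Sum>k<n. if k = j then a k else 0)"
    using pencil_basis_orthonormal[OF p j] by (intro sum.cong refl) auto
  finally show ?thesis using j by simp
qed

lemma pencil_basis_form:
  assumes p: "pencil_basis n A M v d" and M: "M \<in> carrier_mat n n" and C: "C \<in> carrier_mat n n"
    and Cv: "\<And>j k. j < n \<Longrightarrow> k < n \<Longrightarrow> ip (v j) (C *\<^sub>v v k) = (if j = k then c k else 0)"
    and x: "x \<in> carrier_vec n" and y: "y \<in> carrier_vec n"
  shows "ip x (C *\<^sub>v y) = (\<Sum>k<n. cnj (ip (v k) (M *\<^sub>v x)) * ip (v k) (M *\<^sub>v y) * c k)"
proof -
  have vc: "\<And>k. k \<in> {..<n} \<Longrightarrow> v k \<in> carrier_vec n" using pencil_basis_carrier[OF p] by auto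
  define zx where "zx k = ip (v k) (M *\<^sub>v x)" for k
  define zy where "zy k = ip (v k) (M *\<^sub>v y)" for k
  have xe: "x = vsum n (\<lambda>k. zx k \<cdot>\<^sub>v v k) {..<n}" unfolding zx_def by (rule pencil_basis_expansion[OF p M x])
  have ye: "y = vsum n (\<lambda>k. zy k \<cdot>\<^sub>v v k) {..<n}" unfolding zy_def by (rule pencil_basis_expansion[OF p M y])
  have "ip x (C *\<^sub>v y) = ip x (vsum n (\<lambda>k. zy k \<cdot>\<^sub>v (C *\<^sub>v v k)) {..<n})"
    by (subst ye) (simp only: mult_mat_vsum_smult[of C n "{..<n}" v, OF C vc])
  also have "\<dots> = (\<Sum>k<n. zy k * ip x (C *\<^sub>v v k))"
    by (rule ip_vsum_smult_right[OF x]) (use vc C in auto)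
  also have "\<dots> = (\<Sum>k<n. zy k * (\<Sum>j<n. cnj (zx j) * ip (v j) (C *\<^sub>v v k)))"
  proof (intro sum.cong refl)
    fix k assume "k \<in> {..<n}"
    then show "zy k * ip x (C *\<^sub>v v k) = zy k * (\<Sum>j<n. cnj (zx j) * ip (v j) (C *\<^sub>v v k))"
      using ip_vsum_smult_left[of "C *\<^sub>v v k" n "{..<n}" v zx] vc C xe by simp
  qed
  also have "\<dots> = (\<Sum>k<n. zy k * (cnj (zx k) * c k))"
  proof (intro sum.cong refl)
    fix k assume k: "k \<in> {..<n}"
    have "(\<Sum>j<n. cnj (zx j) * ip (v j) (C *\<^sub>v v k)) = (\<Sum>j<n. if j = k then cnj (zx j) * c k else 0)"
      using Cv k by (intro sum.cong refl) auto
    then show "zy k * (\<Sum>j<n. cnj (zx j) * ip (v j) (C *\<^sub>v v k)) = zy k * (cnj (zx k) * c k)"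
      using k by simp
  qed
  finally show ?thesis unfolding zx_def zy_def by (simp add: mult.commute mult.left_commute)
qed

lemma Re_sum_cnj_mult_self: "Re (\<Sum>k<n. cnj (z k) * z k * of_real (r k)) = (\<Sum>k<n. r k * (cmod (z k))\<^sup>2)"
proof -
  have h: "cnj (z k) * z k = of_real ((cmod (z k))\<^sup>2)" for k by (simp only: cnj_mult_self cmod_power2)
  have h2: "cnj (z k) * z k * of_real (r k) = of_real (r k * (cmod (z k))\<^sup>2)" for k
    unfolding h of_real_mult by (rule mult.commute)
  have "(\<Sum>k<n. cnj (z k) * z k * of_real (r k)) = (\<Sum>k<n. of_real (r k * (cmod (z k))\<^sup>2))"
    by (intro sum.cong refl) (rule h2)
  also have "\<dots> = of_real (\<Sum>k<n. r k * (cmod (z k))\<^sup>2)" by (rule of_real_sum[symmetric])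
  finally show ?thesis by simp
qed

lemma pencil_basis_shifted_quadratic:
  assumes p: "pencil_basis n A M v d" and A: "A \<in> carrier_mat n n" and M: "M \<in> carrier_mat n n"
    and x: "x \<in> carrier_vec n"
  shows "Re (ip x ((A - of_real s \<cdot>\<^sub>m M) *\<^sub>v x)) = (\<Sum>k<n. (d k - s) * (cmod (ip (v k) (M *\<^sub>v x)))\<^sup>2)"
proof -
  have "ip (v j) ((A - of_real s \<cdot>\<^sub>m M) *\<^sub>v v k) = (if j = k then of_real (d k - s) else 0)"
    if "j < n" "k < n" for j k
    using that M pencil_basis_carrier[OF p] pencil_basis_orthonormal[OF p]
    by (simp add: pencil_basis_shifted_eigen[OF p A M] ip_smult_right[of _ n])
  hence "ip x ((A - of_real s \<cdot>\<^sub>m M) *\<^sub>v x)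
      = (\<Sum>k<n. cnj (ip (v k) (M *\<^sub>v x)) * ip (v k) (M *\<^sub>v x) * of_real (d k - s))"
    using A M x by (intro pencil_basis_form[OF p M]) auto
  thus ?thesis using Re_sum_cnj_mult_self by simp
qed

lemma pencil_basis_quadratic:
  assumes p: "pencil_basis n A M v d" and A: "A \<in> carrier_mat n n" and M: "M \<in> carrier_mat n n"
    and x: "x \<in> carrier_vec n"
  shows "Re (ip x (A *\<^sub>v x)) = (\<Sum>k<n. d k * (cmod (ip (v k) (M *\<^sub>v x)))\<^sup>2)"
proof -
  have "ip x (A *\<^sub>v x) = (\<Sum>k<n. cnj (ip (v k) (M *\<^sub>v x)) * ip (v k) (M *\<^sub>v x) * of_real (d k))"
    using A M x pencil_basis_carrier[OF p] pencil_basis_orthonormal[OF p]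
    by (intro pencil_basis_form[OF p M]) (auto simp: pencil_basis_eigen[OF p] ip_smult_right[of _ n])
  thus ?thesis using Re_sum_cnj_mult_self by simp
qed

lemma pencil_basis_nonneg:
  assumes p: "pencil_basis n A M v d" and A: "A \<in> carrier_mat n n" and M: "M \<in> carrier_mat n n"
    and d: "\<And>k. k < n \<Longrightarrow> 0 \<le> d k" and x: "x \<in> carrier_vec n"
  shows "Re (ip x (A *\<^sub>v x)) \<ge> 0"
  unfolding pencil_basis_quadratic[OF p A M x] using d by (intro sum_nonneg mult_nonneg_nonneg) auto

lemma pencil_basis_M_quadratic:
  assumes p: "pencil_basis n A M v d" and M: "M \<in> carrier_mat n n" and x: "x \<in> carrier_vec n"
  shows "Re (ip x (M *\<^sub>v x)) = (\<Sum>k<n. (cmod (ip (v k) (M *\<^sub>v x)))\<^sup>2)"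
proof -
  have "ip x (M *\<^sub>v x) = (\<Sum>k<n. cnj (ip (v k) (M *\<^sub>v x)) * ip (v k) (M *\<^sub>v x) * of_real 1)"
    using M x by (intro pencil_basis_form[OF p M]) (auto simp: pencil_basis_orthonormal[OF p])
  thus ?thesis using Re_sum_cnj_mult_self[of "\<lambda>k. ip (v k) (M *\<^sub>v x)" "\<lambda>_. 1" n] by simp
qed

lemma pencil_rayleigh_bounds:
  assumes p: "pencil_basis n B K u \<nu>" and B: "B \<in> carrier_mat n n" and K: "K \<in> carrier_mat n n"
    and x: "x \<in> carrier_vec n" and n: "0 < n"
  shows "Min (\<nu> ` {..<n}) * Re (ip x (K *\<^sub>v x)) \<le> Re (ip x (B *\<^sub>v x))"
    and "Re (ip x (B *\<^sub>v x)) \<le> Max (\<nu> ` {..<n}) * Re (ip x (K *\<^sub>v x))"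
proof -
  note qB = pencil_basis_quadratic[OF p B K x] and qK = pencil_basis_M_quadratic[OF p K x]
  have mn: "Min (\<nu> ` {..<n}) \<le> \<nu> k" "\<nu> k \<le> Max (\<nu> ` {..<n})" if "k < n" for k
    using that by (auto intro: Min_le Max_ge)
  show "Min (\<nu> ` {..<n}) * Re (ip x (K *\<^sub>v x)) \<le> Re (ip x (B *\<^sub>v x))"
    unfolding qB qK sum_distrib_left by (intro sum_mono mult_right_mono) (auto simp: mn)
  show "Re (ip x (B *\<^sub>v x)) \<le> Max (\<nu> ` {..<n}) * Re (ip x (K *\<^sub>v x))"
    unfolding qB qK sum_distrib_left by (intro sum_mono mult_right_mono) (auto simp: mn)
qed

lemma pencil_basis_eigenvalue_root:
  assumes p: "pencil_basis n A M v d" and A: "A \<in> carrier_mat n n" and M: "pos_def n M"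
    and eig: "\<forall>t::complex. det (A - t \<cdot>\<^sub>m M) = det M * (\<Prod>j=1..n. (complex_of_real (lam j) - t))"
    and k: "k < n"
  shows "\<exists>j\<in>{1..n}. lam j = d k"
proof -
  have Mc: "M \<in> carrier_mat n n" using pos_def_carrier[OF M] .
  have "(A - of_real (d k) \<cdot>\<^sub>m M) *\<^sub>v v k = 0\<^sub>v n"
    using pencil_basis_shifted_eigen[OF p A Mc k, of "d k"] Mc pencil_basis_carrier[OF p k]
    by (auto simp: zero_smult_vec)
  hence "det (A - of_real (d k) \<cdot>\<^sub>m M) = 0"
    using det_0_iff_vec_prod_zero[of "A - of_real (d k) \<cdot>\<^sub>m M" n] A Mc pencil_basis_carrier[OF p k]
      pencil_basis_nonzero[OF p Mc k]
    by (auto simp: minus_carrier_mat)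
  hence "(\<Prod>j=1..n. (complex_of_real (lam j) - of_real (d k))) = 0"
    using eig pos_def_det_nonzero[OF M] by simp
  thus ?thesis by auto
qed

context
  fixes n :: nat and B K S Si :: "complex mat" and u :: "nat \<Rightarrow> complex vec" and \<nu> :: "nat \<Rightarrow> real"
  assumes p: "pencil_basis n B K u \<nu>" and Bh: "hermitian n B" and Kh: "hermitian n K"
    and S: "S \<in> carrier_mat n n" and Si: "Si \<in> carrier_mat n n"
    and SSi: "S * Si = 1\<^sub>m n" and SiS: "Si * S = 1\<^sub>m n" and SiSi: "Si * Si = K"
begin

lemma congruent_mult_vec:
  assumes "y \<in> carrier_vec n"
  shows "(S * B * S) *\<^sub>v y = S *\<^sub>v (B *\<^sub>v (S *\<^sub>v y))"
    and "Si *\<^sub>v (S *\<^sub>v y) = y" and "S *\<^sub>v (Si *\<^sub>v y) = y"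
    and "K *\<^sub>v y = Si *\<^sub>v (Si *\<^sub>v y)"
  using assms S Si SSi SiS SiSi hermitian_carrier[OF Bh]
  by (simp add: assoc_mult_mat_vec[of _ n n _ n], (metis assoc_mult_mat_vec one_mult_mat_vec)+)

lemma congruent_eigenvalue_pencil:
  assumes ev: "eigenvalue (S * B * S) c"
  shows "\<exists>j<n. c = of_real (\<nu> j)"
proof -
  have B: "B \<in> carrier_mat n n" and K: "K \<in> carrier_mat n n" using Bh Kh hermitian_carrier by auto
  obtain y where y: "y \<in> carrier_vec n" "y \<noteq> 0\<^sub>v n" and ey: "(S * B * S) *\<^sub>v y = c \<cdot>\<^sub>v y"
    using ev S B unfolding eigenvalue_def eigenvector_def by auto
  define x where "x = S *\<^sub>v y"
  have xc: "x \<in> carrier_vec n" unfolding x_def using S y by simp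
  have xnz: "x \<noteq> 0\<^sub>v n"
    using congruent_mult_vec(2)[OF y(1)] y(2) Si unfolding x_def by (auto simp: mult_mat_vec_zero)
  have Bx: "B *\<^sub>v x = c \<cdot>\<^sub>v (K *\<^sub>v x)"
  proof -
    have "B *\<^sub>v x = Si *\<^sub>v ((S * B * S) *\<^sub>v y)"
      using congruent_mult_vec[OF y(1)] congruent_mult_vec(2)[of "B *\<^sub>v x"] B xc unfolding x_def by simp
    also have "\<dots> = c \<cdot>\<^sub>v (Si *\<^sub>v y)" using ey Si y by (simp add: mult_mat_vec)
    also have "Si *\<^sub>v y = K *\<^sub>v x" using congruent_mult_vec(2,4) y xc unfolding x_def by simp
    finally show ?thesis .
  qed
  obtain j where j: "j < n" "ip (u j) (K *\<^sub>v x) \<noteq> 0"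
    using pencil_basis_nonzero_coord[OF p K xc xnz] by auto
  have uj: "u j \<in> carrier_vec n" using pencil_basis_carrier[OF p j(1)] .
  have "c * ip (u j) (K *\<^sub>v x) = ip (u j) (B *\<^sub>v x)" using Bx uj K xc by (simp add: ip_smult_right)
  also have "\<dots> = of_real (\<nu> j) * ip (u j) (K *\<^sub>v x)"
    using pencil_basis_eigen[OF p j(1)] K uj xc
    by (simp add: hermitian_ip[OF Bh uj xc] hermitian_ip[OF Kh uj xc] ip_smult_left)
  finally show ?thesis using j by auto
qed

lemma pencil_eigenvalue_congruent:
  assumes k: "k < n"
  shows "eigenvalue (S * B * S) (of_real (\<nu> k))"
proof -
  have B: "B \<in> carrier_mat n n" and K: "K \<in> carrier_mat n n" using Bh Kh hermitian_carrier by auto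
  have uk: "u k \<in> carrier_vec n" using pencil_basis_carrier[OF p k] .
  define y where "y = Si *\<^sub>v u k"
  have yc: "y \<in> carrier_vec n" unfolding y_def using Si uk by simp
  have Sy: "S *\<^sub>v y = u k" unfolding y_def by (rule congruent_mult_vec(3)[OF uk])
  have ynz: "y \<noteq> 0\<^sub>v n" using Sy pencil_basis_nonzero[OF p K k] S by (auto simp: mult_mat_vec_zero)
  have "(S * B * S) *\<^sub>v y = S *\<^sub>v (B *\<^sub>v u k)" using congruent_mult_vec(1)[OF yc] Sy by simp
  also have "\<dots> = of_real (\<nu> k) \<cdot>\<^sub>v (S *\<^sub>v (K *\<^sub>v u k))"
    using pencil_basis_eigen[OF p k] S K uk by (simp add: mult_mat_vec)
  also have "S *\<^sub>v (K *\<^sub>v u k) = y"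
    unfolding congruent_mult_vec(4)[OF uk] y_def using congruent_mult_vec(3) Si uk by simp
  finally show ?thesis unfolding eigenvalue_def eigenvector_def using S B yc ynz by auto
qed

lemma congruent_eigenvalues_eq: "Re ` {c. eigenvalue (S * B * S) c} = \<nu> ` {..<n}"
  using congruent_eigenvalue_pencil pencil_eigenvalue_congruent by force

end

section \<open>The preconditioned conjugate gradient iteration\<close>

definition pcg_r :: "complex mat \<Rightarrow> complex mat \<Rightarrow> complex vec \<Rightarrow> nat \<Rightarrow> complex vec" where
  "pcg_r Al T x0 i = fst (snd (pcg Al T x0 i))"

definition pcg_delta :: "complex mat \<Rightarrow> complex mat \<Rightarrow> complex vec \<Rightarrow> nat \<Rightarrow> complex" where
  "pcg_delta Al T x0 j = pcg_gamma Al T x0 j / ip (Al *\<^sub>v pcg_p Al T x0 j) (pcg_p Al T x0 j)"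

definition pcg_defined :: "complex mat \<Rightarrow> complex mat \<Rightarrow> complex vec \<Rightarrow> nat \<Rightarrow> bool" where
  "pcg_defined Al T x0 i \<longleftrightarrow>
     (\<forall>j<i. pcg_gamma Al T x0 j \<noteq> 0 \<and> ip (Al *\<^sub>v pcg_p Al T x0 j) (pcg_p Al T x0 j) \<noteq> 0)"

fun krylov :: "complex mat \<Rightarrow> complex mat \<Rightarrow> complex vec \<Rightarrow> nat \<Rightarrow> complex vec" where
  "krylov G T x0 0 = x0"
| "krylov G T x0 (Suc m) = T *\<^sub>v (G *\<^sub>v krylov G T x0 m)"

locale pcg_run =
  fixes n :: nat and G T :: "complex mat" and x0 :: "complex vec"
  assumes G: "hermitian n G" and T: "hermitian n T" and x0: "x0 \<in> carrier_vec n"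
begin

abbreviation "X j \<equiv> pcg_x G T x0 j"
abbreviation "R j \<equiv> pcg_r G T x0 j"
abbreviation "\<gamma> j \<equiv> pcg_gamma G T x0 j"
abbreviation "P j \<equiv> pcg_p G T x0 j"
abbreviation "\<delta> j \<equiv> pcg_delta G T x0 j"

lemma pcg_init: "X 0 = x0" "R 0 = - (G *\<^sub>v x0)" "\<gamma> 0 = ip (T *\<^sub>v R 0) (R 0)" "P 0 = T *\<^sub>v R 0"
  by (simp_all add: pcg_x_def pcg_r_def pcg_gamma_def pcg_p_def Let_def)

lemma pcg_Suc:
  "X (Suc j) = X j + \<delta> j \<cdot>\<^sub>v P j"
  "R (Suc j) = R j - \<delta> j \<cdot>\<^sub>v (G *\<^sub>v P j)"
  "\<gamma> (Suc j) = ip (T *\<^sub>v R (Suc j)) (R (Suc j))"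
  "P (Suc j) = T *\<^sub>v R (Suc j) + (\<gamma> (Suc j) / \<gamma> j) \<cdot>\<^sub>v P j"
  by (cases "pcg G T x0 j";
      simp add: pcg_x_def pcg_r_def pcg_gamma_def pcg_p_def pcg_delta_def pcg_step_def Let_def)+

lemma pcg_gamma_eq: "\<gamma> j = ip (T *\<^sub>v R j) (R j)"
  by (cases j) (simp_all add: pcg_init pcg_Suc)

lemma G_carrier: "G \<in> carrier_mat n n" and T_carrier: "T \<in> carrier_mat n n"
  using hermitian_carrier[OF G] hermitian_carrier[OF T] .

lemma pcg_carrier: "X j \<in> carrier_vec n \<and> R j \<in> carrier_vec n \<and> P j \<in> carrier_vec n"
  by (induction j) (use x0 G_carrier T_carrier in \<open>simp_all add: pcg_init pcg_Suc\<close>)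

lemma x_carrier[simp]: "X j \<in> carrier_vec n"
  and r_carrier[simp]: "R j \<in> carrier_vec n"
  and p_carrier[simp]: "P j \<in> carrier_vec n"
  using pcg_carrier by auto

lemma x_dim[simp]: "dim_vec (X j) = n"
  and p_dim[simp]: "dim_vec (P j) = n"
  using pcg_carrier by auto

lemma krylov_carrier: "krylov G T x0 m \<in> carrier_vec n"
  by (induction m) (use x0 G_carrier T_carrier in auto)

lemma krylov_dim[simp]: "dim_vec (krylov G T x0 m) = n"
  using krylov_carrier by auto

lemma r_eq: "R j = - (G *\<^sub>v X j)"
proof (induction j)
  case 0 show ?case by (simp add: pcg_init)
next
  case (Suc j)
  show ?case
    by (rule eq_vecI) (use G_carrier Suc in \<open>auto simp: pcg_Suc mult_add_distrib_mat_vec[OF G_carrier]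
        mult_mat_vec[OF G_carrier] algebra_simps\<close>)
qed

lemma delta_real: "cnj (\<delta> j) = \<delta> j"
proof -
  have "cnj (\<gamma> j) = \<gamma> j"
    using hermitian_form_real(1)[OF T, of "R j"] hermitian_ip[OF T, of "R j" "R j"] by (simp add: pcg_gamma_eq)
  moreover have "cnj (ip (G *\<^sub>v P j) (P j)) = ip (G *\<^sub>v P j) (P j)"
    using hermitian_form_real(1)[OF G, of "P j"] hermitian_ip[OF G, of "P j" "P j"] by simp
  ultimately show ?thesis unfolding pcg_delta_def by simp
qed

lemma delta_nonzero: "pcg_defined G T x0 i \<Longrightarrow> l < i \<Longrightarrow> \<delta> l \<noteq> 0"
  unfolding pcg_defined_def pcg_delta_def by auto

context
  fixes j :: nat
  assumes D: "pcg_defined G T x0 (Suc j)"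
    and IH1: "\<And>l. l < j \<Longrightarrow> ip (P l) (R j) = 0"
    and IH2: "\<And>l. l < j \<Longrightarrow> ip (G *\<^sub>v P l) (P j) = 0"
    and IH3: "ip (P j) (R j) = \<gamma> j"
begin

lemma residual_orthogonal_step:
  assumes l: "l \<le> j"
  shows "ip (P l) (R (Suc j)) = 0"
proof -
  have "ip (P l) (R (Suc j)) = ip (P l) (R j) - \<delta> j * ip (P l) (G *\<^sub>v P j)"
    unfolding pcg_Suc(2)[of j] using G_carrier by (simp add: ip_minus_right[of _ n] ip_smult_right[of _ n])
  also have "ip (P l) (G *\<^sub>v P j) = ip (G *\<^sub>v P l) (P j)" using hermitian_ip[OF G] by simp
  finally have e: "ip (P l) (R (Suc j)) = ip (P l) (R j) - \<delta> j * ip (G *\<^sub>v P l) (P j)" .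
  show ?thesis
  proof (cases "l < j")
    case True thus ?thesis using e IH1 IH2 by simp
  next
    case False
    hence "l = j" using l by simp
    thus ?thesis using e IH3 D unfolding pcg_delta_def pcg_defined_def by simp
  qed
qed

lemma preconditioned_residual_orthogonal_step:
  assumes m: "m \<le> j"
  shows "ip (R m) (T *\<^sub>v R (Suc j)) = 0"
proof -
  have "ip (T *\<^sub>v R m) (R (Suc j)) = 0"
  proof (cases m)
    case 0 thus ?thesis using residual_orthogonal_step[of 0] by (simp add: pcg_init)
  next
    case (Suc m')
    have "ip (P m) (R (Suc j)) = ip (T *\<^sub>v R m) (R (Suc j)) + cnj (\<gamma> m / \<gamma> m') * ip (P m') (R (Suc j))"
      unfolding Suc pcg_Suc(4)[of m'] using T_carrier
      by (simp add: ip_add_left[of _ n] ip_smult_left[of _ n])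
    thus ?thesis using residual_orthogonal_step[of m] residual_orthogonal_step[of m'] m Suc by simp
  qed
  thus ?thesis using hermitian_ip[OF T, of "R m" "R (Suc j)"] by simp
qed

lemma conjugate_step:
  assumes l: "l \<le> j"
  shows "ip (G *\<^sub>v P l) (P (Suc j)) = 0"
proof -
  have dl: "\<delta> l \<noteq> 0" using delta_nonzero[OF D] l by simp
  have e1: "ip (G *\<^sub>v P l) (P (Suc j))
      = ip (G *\<^sub>v P l) (T *\<^sub>v R (Suc j)) + (\<gamma> (Suc j) / \<gamma> j) * ip (G *\<^sub>v P l) (P j)"
    unfolding pcg_Suc(4)[of j] using G_carrier T_carrier by (simp add: ip_add_right[of _ n] ip_smult_right[of _ n])
  txt \<open>\<open>G P l\<close> is a multiple of the residual difference \<open>R l - R (l + 1)\<close>.\<close>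
  have "ip (R (Suc l)) (T *\<^sub>v R (Suc j)) = ip (R l) (T *\<^sub>v R (Suc j)) - cnj (\<delta> l) * ip (G *\<^sub>v P l) (T *\<^sub>v R (Suc j))"
    unfolding pcg_Suc(2)[of l] using G_carrier T_carrier by (simp add: ip_minus_left[of _ n] ip_smult_left[of _ n])
  hence e2: "ip (G *\<^sub>v P l) (T *\<^sub>v R (Suc j)) = (ip (R l) (T *\<^sub>v R (Suc j)) - ip (R (Suc l)) (T *\<^sub>v R (Suc j))) / \<delta> l"
    using dl delta_real[of l] by (simp add: field_simps)
  show ?thesis
  proof (cases "l < j")
    case True
    thus ?thesis using e1 e2 preconditioned_residual_orthogonal_step[of l]
        preconditioned_residual_orthogonal_step[of "Suc l"] IH2[of l] by simp
  next
    case False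
    hence lj: "l = j" using l by simp
    have "ip (R (Suc j)) (T *\<^sub>v R (Suc j)) = \<gamma> (Suc j)"
      unfolding pcg_gamma_eq using hermitian_ip[OF T, of "R (Suc j)" "R (Suc j)"] by simp
    hence "ip (G *\<^sub>v P j) (T *\<^sub>v R (Suc j)) = - \<gamma> (Suc j) / \<delta> j"
      using e2 preconditioned_residual_orthogonal_step[of j] lj by simp
    thus ?thesis using e1 lj D unfolding pcg_delta_def pcg_defined_def by (simp add: field_simps)
  qed
qed

lemma p_residual_step: "ip (P (Suc j)) (R (Suc j)) = \<gamma> (Suc j)"
proof -
  have "ip (P (Suc j)) (R (Suc j))
      = ip (T *\<^sub>v R (Suc j)) (R (Suc j)) + cnj (\<gamma> (Suc j) / \<gamma> j) * ip (P j) (R (Suc j))"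
    unfolding pcg_Suc(4)[of j] using T_carrier by (simp add: ip_add_left[of _ n] ip_smult_left[of _ n])
  thus ?thesis using residual_orthogonal_step[of j] pcg_gamma_eq[of "Suc j"] by simp
qed

end

lemma pcg_orthogonality:
  assumes "pcg_defined G T x0 i" and "j \<le> i"
  shows "(\<forall>l<j. ip (P l) (R j) = 0) \<and> (\<forall>l<j. ip (G *\<^sub>v P l) (P j) = 0) \<and> ip (P j) (R j) = \<gamma> j"
  using \<open>j \<le> i\<close>
proof (induction j)
  case 0 show ?case by (simp add: pcg_init pcg_gamma_eq)
next
  case (Suc j)
  have D: "pcg_defined G T x0 (Suc j)" using assms(1) Suc.prems unfolding pcg_defined_def by auto
  from Suc show ?case
    using residual_orthogonal_step[OF D] conjugate_step[OF D] p_residual_step[OF D]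
    by (auto simp: less_Suc_eq_le)
qed

abbreviation "search_span k \<equiv> vspan n P k"

lemma x_in_search_span: "X j - x0 \<in> search_span j"
proof (induction j)
  case 0
  have "X 0 - x0 = 0\<^sub>v n" using x0 by (simp add: pcg_init)
  thus ?case using vspan_zero[where f = P, OF p_carrier] by simp
next
  case (Suc j)
  have "X (Suc j) - x0 = (X j - x0) + \<delta> j \<cdot>\<^sub>v P j"
    by (rule eq_vecI) (use x0 in \<open>auto simp: pcg_Suc\<close>)
  thus ?case
    using vspan_add[where f = P, OF p_carrier vspan_mono[where f = P, OF p_carrier _ Suc.IH]
        vspan_smult[where f = P, OF p_carrier vspan_generator[where f = P, OF p_carrier]]] by auto
qed

lemma Tr_in_search_span: "T *\<^sub>v R m \<in> search_span (Suc m)"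
proof (cases m)
  case 0 thus ?thesis using vspan_generator[where f = P, OF p_carrier, of 0 1] by (simp add: pcg_init)
next
  case (Suc m')
  have "T *\<^sub>v R m = P m - (\<gamma> m / \<gamma> m') \<cdot>\<^sub>v P m'"
    by (rule eq_vecI) (use T_carrier Suc in \<open>auto simp: pcg_Suc(4)[of m']\<close>)
  thus ?thesis
    using vspan_diff[where f = P, OF p_carrier vspan_generator[where f = P, OF p_carrier] vspan_smult[where f = P, OF p_carrier vspan_generator[where f = P, OF p_carrier]]] Suc
    by auto
qed

lemma TGp_in_search_span:
  assumes d: "\<delta> l \<noteq> 0"
  shows "T *\<^sub>v (G *\<^sub>v P l) \<in> search_span (Suc (Suc l))"
proof -
  have "G *\<^sub>v P l = (1 / \<delta> l) \<cdot>\<^sub>v (R l - R (Suc l))"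
    by (rule eq_vecI) (use G_carrier d in \<open>auto simp: pcg_Suc(2)[of l] field_simps\<close>)
  hence "T *\<^sub>v (G *\<^sub>v P l) = (1 / \<delta> l) \<cdot>\<^sub>v (T *\<^sub>v R l - T *\<^sub>v R (Suc l))"
    using T_carrier by (simp add: mult_mat_vec[OF T_carrier] mult_minus_distrib_mat_vec[OF T_carrier])
  thus ?thesis
    using vspan_smult[where f = P, OF p_carrier vspan_diff[where f = P, OF p_carrier vspan_mono[where f = P, OF p_carrier _ Tr_in_search_span] Tr_in_search_span]]
    by auto
qed

lemma krylov_in_search_span:
  assumes D: "pcg_defined G T x0 i" and m: "1 \<le> m" "m \<le> i"
  shows "krylov G T x0 m \<in> search_span m"
  using m
proof (induction m)
  case 0 thus ?case by simp
next
  case (Suc m)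
  show ?case
  proof (cases m)
    case 0
    have "krylov G T x0 (Suc m) = (-1) \<cdot>\<^sub>v P 0"
      by (rule eq_vecI) (use 0 T_carrier G_carrier x0 in \<open>auto simp: pcg_init mult_mat_vec_conv_sum sum_negf\<close>)
    thus ?thesis using vspan_smult[where f = P, OF p_carrier vspan_generator[where f = P, OF p_carrier, of 0 1]] 0 by simp
  next
    case (Suc m')
    hence "krylov G T x0 m \<in> search_span m" using Suc.IH Suc.prems by simp
    then obtain a where "G *\<^sub>v krylov G T x0 m = vsum n (\<lambda>l. a l \<cdot>\<^sub>v (G *\<^sub>v P l)) {..<m}"
      by (rule vspan_mult_mat[OF G_carrier p_carrier])
    hence "krylov G T x0 (Suc m) = vsum n (\<lambda>l. a l \<cdot>\<^sub>v (T *\<^sub>v (G *\<^sub>v P l))) {..<m}"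
      using mult_mat_vsum_smult[OF T_carrier, of "{..<m}" "\<lambda>l. G *\<^sub>v P l" a] G_carrier by simp
    also have "\<dots> \<in> search_span (Suc m)"
    proof (rule vspan_vsum[where f = P, OF p_carrier])
      fix l assume l: "l \<in> {..<m}"
      have "\<delta> l \<noteq> 0" using delta_nonzero[OF D] l Suc.prems by simp
      thus "a l \<cdot>\<^sub>v (T *\<^sub>v (G *\<^sub>v P l)) \<in> search_span (Suc m)"
        using l by (intro vspan_smult[where f = P, OF p_carrier] vspan_mono[where f = P, OF p_carrier _ TGp_in_search_span]) auto
    qed simp
    finally show ?thesis .
  qed
qed

text \<open>Every vector \<open>x0 + (span of the Krylov vectors)\<close> differs from the iterate \<open>X i\<close> by an
  element of the search space, which is \<open>G\<close>-orthogonal to \<open>X i\<close> because \<open>G X i = - R i\<close>.\<close>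

lemma pcg_energy_optimal:
  assumes D: "pcg_defined G T x0 i"
    and psd: "\<And>x. x \<in> carrier_vec n \<Longrightarrow> Re (ip x (G *\<^sub>v x)) \<ge> 0"
    and c0: "c 0 = 1"
  defines "y \<equiv> vsum n (\<lambda>m. c m \<cdot>\<^sub>v krylov G T x0 m) {..i}"
  shows "Re (ip (X i) (G *\<^sub>v X i)) \<le> Re (ip y (G *\<^sub>v y))"
proof -
  have "{..i} = insert 0 {1..i}" by auto
  hence ye: "y = x0 + vsum n (\<lambda>m. c m \<cdot>\<^sub>v krylov G T x0 m) {1..i}"
    unfolding y_def using krylov_carrier x0 c0 by (simp add: vsum_insert)
  have v: "vsum n (\<lambda>m. c m \<cdot>\<^sub>v krylov G T x0 m) {1..i} \<in> search_span i"
    using krylov_in_search_span[OF D]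
    by (intro vspan_vsum[where f = P, OF p_carrier] vspan_smult[where f = P, OF p_carrier]) (auto intro: vspan_mono[where f = P, OF p_carrier])
  have "y - X i = vsum n (\<lambda>m. c m \<cdot>\<^sub>v krylov G T x0 m) {1..i} - (X i - x0)"
    unfolding ye by (rule eq_vecI) (use x0 in auto)
  hence dV: "y - X i \<in> search_span i" using vspan_diff[where f = P, OF p_carrier v x_in_search_span] by simp
  define d where "d = y - X i"
  have dc: "d \<in> carrier_vec n" using vspan_carrier[where f = P, OF p_carrier dV] unfolding d_def .
  have yd: "y = X i + d" unfolding d_def by (rule eq_vecI) (auto simp: y_def)
  have "ip d (R i) = 0"
    using vspan_orthogonal[where f = P, OF p_carrier dV[folded d_def], of "R i"] pcg_orthogonality[OF D, of i] by auto
  moreover have "G *\<^sub>v X i = (-1) \<cdot>\<^sub>v R i" unfolding r_eq[of i] by (rule eq_vecI) (use G_carrier in auto)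
  ultimately have o1: "ip d (G *\<^sub>v X i) = 0" using dc by (simp add: ip_smult_right[of _ n])
  have o2: "ip (X i) (G *\<^sub>v d) = 0"
    using hermitian_ip[OF G, of "X i" d] o1 cnj_ip[of d n "G *\<^sub>v X i"] dc G_carrier by simp
  have "ip y (G *\<^sub>v y) = ip (X i) (G *\<^sub>v X i) + ip (X i) (G *\<^sub>v d) + ip d (G *\<^sub>v X i) + ip d (G *\<^sub>v d)"
    unfolding yd using dc G_carrier
    by (simp add: mult_add_distrib_mat_vec[OF G_carrier] ip_add_left[of _ n] ip_add_right[of _ n])
  thus ?thesis using psd[OF dc] o1 o2 by simp
qed

end

section \<open>Chebyshev polynomials\<close>

lemma cheb_cos_pair: "cheb k (cos t) = cos (real k * t) \<and> cheb (Suc k) (cos t) = cos (real (Suc k) * t)"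
proof (induction k)
  case 0 thus ?case by simp
next
  case (Suc k)
  have "cos (real (Suc (Suc k)) * t) = 2 * cos t * cos (real (Suc k) * t) - cos (real k * t)"
  proof -
    have a: "cos (real (Suc k) * t + t) = cos (real (Suc k) * t) * cos t - sin (real (Suc k) * t) * sin t"
      by (rule cos_add)
    have b: "cos (real (Suc k) * t - t) = cos (real (Suc k) * t) * cos t + sin (real (Suc k) * t) * sin t"
      by (rule cos_diff)
    have c: "real (Suc (Suc k)) * t = real (Suc k) * t + t" "real k * t = real (Suc k) * t - t"
      by (simp_all add: algebra_simps)
    show ?thesis unfolding c a b by simp
  qed
  thus ?case using Suc by simp
qed

lemma cheb_cos: "cheb k (cos t) = cos (real k * t)" using cheb_cos_pair by blast

lemma cheb_abs_le_1:
  assumes "\<bar>x\<bar> \<le> 1"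
  shows "\<bar>cheb k x\<bar> \<le> 1"
proof -
  have "x = cos (arccos x)" using assms by (simp add: cos_arccos)
  hence "cheb k x = cos (real k * arccos x)" using cheb_cos by metis
  thus ?thesis by simp
qed

lemma cheb_ge_1_mono:
  assumes "x \<ge> 1"
  shows "cheb k x \<ge> 1 \<and> cheb (Suc k) x \<ge> cheb k x"
proof (induction k)
  case 0 thus ?case using assms by simp
next
  case (Suc k)
  have "1 * cheb (Suc k) x \<le> x * cheb (Suc k) x" by (rule mult_right_mono) (use assms Suc in auto)
  hence h: "2 * x * cheb (Suc k) x \<ge> 2 * cheb (Suc k) x" by simp
  have "cheb (Suc (Suc k)) x = 2 * x * cheb (Suc k) x - cheb k x" by simp
  thus ?case using Suc h by linarith
qed

fun cheb_poly :: "nat \<Rightarrow> real poly" where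
  "cheb_poly 0 = 1"
| "cheb_poly (Suc 0) = [:0, 1:]"
| "cheb_poly (Suc (Suc k)) = [:0, 2:] * cheb_poly (Suc k) - cheb_poly k"

lemma poly_cheb_poly: "poly (cheb_poly k) x = cheb k x"
  by (induction k rule: cheb_poly.induct) auto

lemma degree_cheb_poly: "degree (cheb_poly k) \<le> k"
proof (induction k rule: cheb_poly.induct)
  case 1 thus ?case by simp
next
  case 2 thus ?case by simp
next
  case (3 k)
  have "degree ([:0, 2:] * cheb_poly (Suc k)) \<le> Suc (Suc k)"
    using degree_mult_le[of "[:0, 2:]" "cheb_poly (Suc k)"] 3 by simp
  moreover have "degree (cheb_poly k) \<le> Suc (Suc k)" using 3 by simp
  ultimately show ?case by (simp add: degree_diff_le)
qed

lemma poly_conv_sum_upto: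
  fixes q :: "real poly"
  assumes "degree q \<le> i"
  shows "poly q x = (\<Sum>m\<le>i. coeff q m * x ^ m)"
proof -
  have "poly q x = (\<Sum>m\<le>degree q. coeff q m * x ^ m)" by (rule poly_altdef)
  also have "\<dots> = (\<Sum>m\<le>i. coeff q m * x ^ m)"
    using assms by (intro sum.mono_neutral_left) (auto simp: coeff_eq_0)
  finally show ?thesis .
qed

lemma scaled_cheb_poly_exists:
  fixes a b :: real
  assumes a: "0 < a" and ab: "a < b"
  shows "\<exists>c::nat \<Rightarrow> real. c 0 = 1 \<and> (\<forall>t. a \<le> t \<longrightarrow> t \<le> b \<longrightarrow>
     \<bar>\<Sum>m\<le>i. c m * t ^ m\<bar> \<le> 1 / cheb i ((b + a) / (b - a)))"
proof -
  define \<phi> where "\<phi> = (b + a) / (b - a)"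
  define C where "C = cheb i \<phi>"
  have \<phi>1: "\<phi> \<ge> 1" unfolding \<phi>_def using a ab by (simp add: field_simps)
  have C1: "C \<ge> 1" unfolding C_def using cheb_ge_1_mono[OF \<phi>1] by simp
  define q where "q = smult (1 / C) (pcompose (cheb_poly i) [:\<phi>, - 2 / (b - a):])"
  have pq: "poly q t = cheb i ((b + a - 2 * t) / (b - a)) / C" for t
  proof -
    have "poly q t = cheb i (\<phi> + t * (- 2 / (b - a))) / C" unfolding q_def by (simp add: poly_pcompose poly_cheb_poly)
    also have "\<phi> + t * (- 2 / (b - a)) = (b + a - 2 * t) / (b - a)"
      unfolding \<phi>_def using ab by (simp add: diff_divide_distrib)
    finally show ?thesis .
  qed
  have dq: "degree q \<le> i"
  proof -
    have d1: "degree [:\<phi>, - 2 / (b - a):] \<le> 1" using degree_pCons_le[of \<phi> "[:- 2 / (b - a):]"] by simp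
    have "degree (cheb_poly i) * degree [:\<phi>, - 2 / (b - a):] \<le> i * 1"
      by (rule mult_le_mono[OF degree_cheb_poly d1])
    hence "degree (pcompose (cheb_poly i) [:\<phi>, - 2 / (b - a):]) \<le> i * 1"
      using degree_pcompose_le[of "cheb_poly i" "[:\<phi>, - 2 / (b - a):]"] by linarith
    thus ?thesis unfolding q_def by simp
  qed
  show ?thesis
  proof (intro exI[of _ "coeff q"] conjI allI impI)
    have "coeff q 0 = poly q 0" by (simp add: poly_0_coeff_0)
    also have "\<dots> = 1" using pq[of 0] C1 unfolding C_def \<phi>_def by simp
    finally show "coeff q 0 = 1" .
  next
    fix t assume t: "a \<le> t" "t \<le> b"
    have "\<bar>(b + a - 2 * t) / (b - a)\<bar> \<le> 1" using t ab by (simp add: abs_le_iff field_simps)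
    hence "\<bar>cheb i ((b + a - 2 * t) / (b - a))\<bar> \<le> 1" by (rule cheb_abs_le_1)
    hence "\<bar>poly q t\<bar> \<le> 1 / C" using pq[of t] C1 by (simp add: abs_div divide_right_mono)
    thus "\<bar>\<Sum>m\<le>i. coeff q m * t ^ m\<bar> \<le> 1 / cheb i ((b + a) / (b - a))"
      using poly_conv_sum_upto[OF dq] unfolding C_def \<phi>_def by metis
  qed
qed

lemma poly_root_exists:
  fixes a :: real
  assumes a: "0 < a" and i: "1 \<le> i"
  shows "\<exists>c::nat \<Rightarrow> real. c 0 = 1 \<and> (\<Sum>m\<le>i. c m * a ^ m) = 0"
proof (intro exI[of _ "\<lambda>m. if m = 0 then 1 else if m = 1 then - 1 / a else 0"] conjI)
  have "(\<Sum>m\<le>i. (if m = 0 then 1 else if m = 1 then - 1 / a else 0) * a ^ m)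
     = (\<Sum>m\<in>{0,1}. (if m = 0 then 1 else if m = 1 then - 1 / a else 0) * a ^ m)"
    using i by (intro sum.mono_neutral_right) auto
  also have "\<dots> = 0" using a by simp
  finally show "(\<Sum>m\<le>i. (if m = 0 then 1 else if m = 1 then - 1 / a else 0) * a ^ m) = 0" .
qed simp

section \<open>Spectral bounds for shifted pencils\<close>

lemma shift_ratio_le:
  fixes d l1 l2 s :: real
  assumes "s < l1" "l1 < l2" "l2 \<le> d"
  shows "(l2 - l1) / (l2 - s) * (d - s) \<le> d - l1"
proof -
  have "(d - l1) * (l2 - s) - (l2 - l1) * (d - s) = (l1 - s) * (d - l2)" by (simp add: algebra_simps)
  moreover have "(l1 - s) * (d - l2) \<ge> 0" using assms by simp
  ultimately have "(l2 - l1) * (d - s) \<le> (d - l1) * (l2 - s)" by linarith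
  thus ?thesis using assms by (simp add: pos_divide_le_eq mult.commute mult.left_commute)
qed

lemma shift_ratio_ge:
  fixes d l1 lN s :: real
  assumes "s < l1" "l1 \<le> d" "d \<le> lN"
  shows "d - l1 \<le> (lN - l1) / (lN - s) * (d - s)"
proof -
  have "(lN - l1) * (d - s) - (d - l1) * (lN - s) = (l1 - s) * (lN - d)" by (simp add: algebra_simps)
  moreover have "(l1 - s) * (lN - d) \<ge> 0" using assms by simp
  ultimately have "(d - l1) * (lN - s) \<le> (lN - l1) * (d - s)" by linarith
  thus ?thesis using assms by (simp add: pos_le_divide_eq mult.commute mult.left_commute)
qed

lemma shifted_form_upper_bound:
  assumes p: "pencil_basis n A M w d" and A: "A \<in> carrier_mat n n" and M: "M \<in> carrier_mat n n"
    and d: "\<And>l. l < n \<Longrightarrow> l1 \<le> d l \<and> d l \<le> lN" and s: "s < l1" and x: "x \<in> carrier_vec n"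
  shows "Re (ip x ((A - of_real l1 \<cdot>\<^sub>m M) *\<^sub>v x))
    \<le> (lN - l1) / (lN - s) * Re (ip x ((A - of_real s \<cdot>\<^sub>m M) *\<^sub>v x))"
  unfolding pencil_basis_shifted_quadratic[OF p A M x] sum_distrib_left
proof (intro sum_mono)
  fix l assume "l \<in> {..<n}"
  hence "d l - l1 \<le> (lN - l1) / (lN - s) * (d l - s)" using d s by (intro shift_ratio_ge) auto
  thus "(d l - l1) * (cmod (ip (w l) (M *\<^sub>v x)))\<^sup>2
      \<le> (lN - l1) / (lN - s) * ((d l - s) * (cmod (ip (w l) (M *\<^sub>v x)))\<^sup>2)"
    by (simp only: mult.assoc[symmetric]) (rule mult_right_mono, simp_all)
qed

lemma shifted_form_lower_bound:
  assumes p: "pencil_basis n A M w d" and A: "A \<in> carrier_mat n n" and M: "M \<in> carrier_mat n n"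
    and d: "\<And>l. l < n \<Longrightarrow> d l \<noteq> l1 \<Longrightarrow> l2 \<le> d l" and s: "s < l1" "l1 < l2"
    and x: "x \<in> carrier_vec n" and x_orth: "\<And>l. l < n \<Longrightarrow> d l = l1 \<Longrightarrow> ip (w l) (M *\<^sub>v x) = 0"
  shows "(l2 - l1) / (l2 - s) * Re (ip x ((A - of_real s \<cdot>\<^sub>m M) *\<^sub>v x))
    \<le> Re (ip x ((A - of_real l1 \<cdot>\<^sub>m M) *\<^sub>v x))"
  unfolding pencil_basis_shifted_quadratic[OF p A M x] sum_distrib_left
proof (intro sum_mono)
  fix l assume l: "l \<in> {..<n}"
  show "(l2 - l1) / (l2 - s) * ((d l - s) * (cmod (ip (w l) (M *\<^sub>v x)))\<^sup>2)
      \<le> (d l - l1) * (cmod (ip (w l) (M *\<^sub>v x)))\<^sup>2"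
  proof (cases "d l = l1")
    case True thus ?thesis using x_orth l by simp
  next
    case False
    hence "(l2 - l1) / (l2 - s) * (d l - s) \<le> d l - l1" using d l s by (intro shift_ratio_le) auto
    thus ?thesis by (simp only: mult.assoc[symmetric]) (rule mult_right_mono, simp_all)
  qed
qed

lemma pencil_kernel_component:
  fixes s :: real
  assumes p: "pencil_basis n A M w d" and A: "A \<in> carrier_mat n n" and M: "M \<in> carrier_mat n n"
    and x: "x \<in> carrier_vec n"
  defines "e \<equiv> vsum n (\<lambda>l. (if d l = s then ip (w l) (M *\<^sub>v x) else 0) \<cdot>\<^sub>v w l) {..<n}"
  shows "(A - of_real s \<cdot>\<^sub>m M) *\<^sub>v e = 0\<^sub>v n"
    and "\<And>l. l < n \<Longrightarrow> d l = s \<Longrightarrow> ip (w l) (M *\<^sub>v (x - e)) = 0"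
proof -
  have wc: "\<And>l. l \<in> {..<n} \<Longrightarrow> w l \<in> carrier_vec n" using pencil_basis_carrier[OF p] by auto
  have As: "A - of_real s \<cdot>\<^sub>m M \<in> carrier_mat n n" using A M by (simp add: minus_carrier_mat)
  have "(A - of_real s \<cdot>\<^sub>m M) *\<^sub>v e
      = vsum n (\<lambda>l. (if d l = s then ip (w l) (M *\<^sub>v x) else 0) \<cdot>\<^sub>v ((A - of_real s \<cdot>\<^sub>m M) *\<^sub>v w l)) {..<n}"
    unfolding e_def by (rule mult_mat_vsum_smult[OF As wc])
  also have "\<dots> = vsum n (\<lambda>l. 0\<^sub>v n) {..<n}"
    using pencil_basis_shifted_eigen[OF p A M, of _ s] M wc by (intro vsum_cong) (auto simp: zero_smult_vec)
  finally show "(A - of_real s \<cdot>\<^sub>m M) *\<^sub>v e = 0\<^sub>v n" by (simp add: vsum_zero)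
  fix l assume l: "l < n" "d l = s"
  have "ip (w l) (M *\<^sub>v (x - e)) = ip (w l) (M *\<^sub>v x) - ip (w l) (M *\<^sub>v e)"
    using M x wc l by (simp add: e_def mult_minus_distrib_mat_vec[OF M] ip_minus_right[of _ n])
  also have "ip (w l) (M *\<^sub>v e) = ip (w l) (M *\<^sub>v x)"
    unfolding e_def pencil_basis_coord[OF p M l(1)] using l by simp
  finally show "ip (w l) (M *\<^sub>v (x - e)) = 0" by simp
qed

text \<open>A vector \<open>x\<close> with \<open>(A - l1 M) x = \<mu> K x\<close>, \<open>\<mu> \<noteq> 0\<close>, is \<open>K\<close>-orthogonal to the kernel of
  \<open>A - l1 M\<close>; removing its kernel component \<open>e\<close> leaves the \<open>(A - l1 M)\<close>-energy unchanged and
  does not decrease the \<open>K\<close>-energy, so that \<open>shifted_form_lower_bound\<close> applies.\<close>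

lemma shifted_pencil_eigenvalue_lower_bound:
  assumes p: "pencil_basis n A M w d" and Ah: "hermitian n A" and Mp: "pos_def n M"
    and Kh: "hermitian n K" and Kpsd: "\<And>e. e \<in> carrier_vec n \<Longrightarrow> Re (ip e (K *\<^sub>v e)) \<ge> 0"
    and d: "\<And>l. l < n \<Longrightarrow> d l \<noteq> l1 \<Longrightarrow> l2 \<le> d l" and s: "s < l1" "l1 < l2"
    and x: "x \<in> carrier_vec n" and Alx: "(A - of_real l1 \<cdot>\<^sub>m M) *\<^sub>v x = of_real \<mu> \<cdot>\<^sub>v (K *\<^sub>v x)"
    and \<mu>: "\<mu> \<noteq> 0"
    and ray: "\<And>y. y \<in> carrier_vec n \<Longrightarrow> \<nu>m * Re (ip y (K *\<^sub>v y)) \<le> Re (ip y ((A - of_real s \<cdot>\<^sub>m M) *\<^sub>v y))"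
    and \<nu>m: "\<nu>m \<ge> 0"
  shows "(l2 - l1) / (l2 - s) * \<nu>m * Re (ip x (K *\<^sub>v x)) \<le> Re (ip x ((A - of_real l1 \<cdot>\<^sub>m M) *\<^sub>v x))"
proof -
  have Ac: "A \<in> carrier_mat n n" and Mc: "M \<in> carrier_mat n n" and Kc: "K \<in> carrier_mat n n"
    using hermitian_carrier[OF Ah] pos_def_carrier[OF Mp] hermitian_carrier[OF Kh] .
  define Al where "Al = A - of_real l1 \<cdot>\<^sub>m M"
  have Alc: "Al \<in> carrier_mat n n" unfolding Al_def using Ac Mc by (simp add: minus_carrier_mat)
  have Alh: "hermitian n Al" unfolding Al_def by (rule hermitian_diff_smult[OF Ah pos_def_hermitian[OF Mp]])
  define e where "e = vsum n (\<lambda>l. (if d l = l1 then ip (w l) (M *\<^sub>v x) else 0) \<cdot>\<^sub>v w l) {..<n}"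
  note kernel = pencil_kernel_component[OF p Ac Mc x, where s = l1, folded e_def Al_def]
  have ecar: "e \<in> carrier_vec n" unfolding e_def by simp
  define x' where "x' = x - e"
  have x'c: "x' \<in> carrier_vec n" unfolding x'_def using x ecar by simp
  have xe: "x = x' + e" unfolding x'_def by (rule eq_vecI) (use x ecar in auto)
  have eKx: "ip e (K *\<^sub>v x) = 0"
  proof -
    have "of_real \<mu> * ip e (K *\<^sub>v x) = ip e (Al *\<^sub>v x)" using Alx ecar Kc x unfolding Al_def by (simp add: ip_smult_right)
    also have "\<dots> = 0" unfolding hermitian_ip[OF Alh ecar x] kernel(1) using x by (simp add: ip_zero_left)
    finally show ?thesis using \<mu> by simp
  qed
  have xKe: "ip x (K *\<^sub>v e) = 0"
    using hermitian_ip[OF Kh x ecar] cnj_ip[of e n "K *\<^sub>v x"] eKx ecar Kc x by simp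
  have E1: "ip x (Al *\<^sub>v x) = ip x' (Al *\<^sub>v x')"
  proof -
    have "Al *\<^sub>v x = Al *\<^sub>v x'"
      using kernel(1) Alc x'c ecar by (subst xe) (simp add: mult_add_distrib_mat_vec[OF Alc])
    hence "ip x (Al *\<^sub>v x) = ip x' (Al *\<^sub>v x') + ip e (Al *\<^sub>v x')"
      using xe x'c ecar Alc by (simp add: ip_add_left[of _ n])
    also have "ip e (Al *\<^sub>v x') = 0"
      unfolding hermitian_ip[OF Alh ecar x'c] kernel(1) using x'c by (simp add: ip_zero_left)
    finally show ?thesis by simp
  qed
  have E2: "(l2 - l1) / (l2 - s) * Re (ip x' ((A - of_real s \<cdot>\<^sub>m M) *\<^sub>v x')) \<le> Re (ip x' (Al *\<^sub>v x'))"
    unfolding Al_def x'_def by (rule shifted_form_lower_bound[OF p Ac Mc d s x'c[unfolded x'_def] kernel(2)])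
  have E3: "Re (ip x (K *\<^sub>v x)) \<le> Re (ip x' (K *\<^sub>v x'))"
  proof -
    have "ip x' (K *\<^sub>v x') = ip x (K *\<^sub>v x) - ip x (K *\<^sub>v e) - ip e (K *\<^sub>v x) + ip e (K *\<^sub>v e)"
      unfolding x'_def using x ecar Kc
      by (simp add: mult_minus_distrib_mat_vec[OF Kc] ip_minus_right[of _ n] ip_minus_left[of _ n])
    thus ?thesis using eKx xKe Kpsd[OF ecar] by simp
  qed
  have c2: "(l2 - l1) / (l2 - s) \<ge> 0" using s by simp
  have "(l2 - l1) / (l2 - s) * \<nu>m * Re (ip x (K *\<^sub>v x)) \<le> (l2 - l1) / (l2 - s) * \<nu>m * Re (ip x' (K *\<^sub>v x'))"
    using E3 mult_nonneg_nonneg[OF c2 \<nu>m] by (intro mult_left_mono) auto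
  also have "\<dots> \<le> (l2 - l1) / (l2 - s) * Re (ip x' ((A - of_real s \<cdot>\<^sub>m M) *\<^sub>v x'))"
    using mult_left_mono[OF ray[OF x'c] c2] by (simp only: mult.assoc)
  also have "\<dots> \<le> Re (ip x (Al *\<^sub>v x))" using E1 E2 by simp
  finally show ?thesis unfolding Al_def .
qed

lemma pencil_eigenvalue_range:
  assumes p: "pencil_basis n A M w d" and A: "A \<in> carrier_mat n n" and M: "pos_def n M"
    and eig: "\<forall>t::complex. det (A - t \<cdot>\<^sub>m M) = det M * (\<Prod>j=1..n. (complex_of_real (lam j) - t))"
    and sorted: "\<forall>j k. 1 \<le> j \<longrightarrow> j \<le> k \<longrightarrow> k \<le> n \<longrightarrow> lam j \<le> lam k"
    and l: "l < n"
  shows "lam 1 \<le> d l" "d l \<le> lam n" "d l \<noteq> lam 1 \<Longrightarrow> lam 2 \<le> d l"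
proof -
  have srt: "\<And>p q. 1 \<le> p \<Longrightarrow> p \<le> q \<Longrightarrow> q \<le> n \<Longrightarrow> lam p \<le> lam q" using sorted by blast
  obtain j where j: "j \<in> {1..n}" "lam j = d l" using pencil_basis_eigenvalue_root[OF p A M eig l] by auto
  show "lam 1 \<le> d l" "d l \<le> lam n" using srt[of 1 j] srt[of j n] j by auto
  assume "d l \<noteq> lam 1"
  hence "2 \<le> j" using j by (cases "j = 1") auto
  thus "lam 2 \<le> d l" using srt[of 2 j] j by auto
qed

lemma pencil_shift_nonneg:
  assumes p: "pencil_basis n A M w d" and A: "A \<in> carrier_mat n n" and M: "M \<in> carrier_mat n n"
    and d: "\<And>l. l < n \<Longrightarrow> s \<le> d l" and x: "x \<in> carrier_vec n"
  shows "Re (ip x ((A - of_real s \<cdot>\<^sub>m M) *\<^sub>v x)) \<ge> 0"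
  unfolding pencil_basis_shifted_quadratic[OF p A M x] using d by (intro sum_nonneg mult_nonneg_nonneg) auto

lemma pencil_shift_pos_def:
  assumes p: "pencil_basis n A M w d" and A: "hermitian n A" and M: "pos_def n M"
    and d: "\<And>l. l < n \<Longrightarrow> s < d l"
  shows "pos_def n (A - of_real s \<cdot>\<^sub>m M)"
  unfolding pos_def_def
proof (intro conjI ballI impI hermitian_diff_smult[OF A pos_def_hermitian[OF M]])
  have Ac: "A \<in> carrier_mat n n" and Mc: "M \<in> carrier_mat n n"
    using hermitian_carrier[OF A] pos_def_carrier[OF M] .
  fix x :: "complex vec" assume x: "x \<in> carrier_vec n" and nz: "x \<noteq> 0\<^sub>v n"
  obtain k where k: "k < n" "ip (w k) (M *\<^sub>v x) \<noteq> 0" using pencil_basis_nonzero_coord[OF p Mc x nz] by auto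
  have "(\<Sum>l<n. (d l - s) * (cmod (ip (w l) (M *\<^sub>v x)))\<^sup>2) > 0"
  proof (rule sum_pos2[of "{..<n}" k])
    fix l assume "l \<in> {..<n}"
    thus "0 \<le> (d l - s) * (cmod (ip (w l) (M *\<^sub>v x)))\<^sup>2" using d[of l] by simp
  qed (use k d in auto)
  thus "Re (ip x ((A - of_real s \<cdot>\<^sub>m M) *\<^sub>v x)) > 0" unfolding pencil_basis_shifted_quadratic[OF p Ac Mc x] .
qed

lemma pencil_eigenvalues_pos:
  assumes p: "pencil_basis n B K u \<nu>" and B: "pos_def n B" and K: "K \<in> carrier_mat n n" and k: "k < n"
  shows "\<nu> k > 0"
proof -
  have uk: "u k \<in> carrier_vec n" using pencil_basis_carrier[OF p k] .
  have "ip (u k) (B *\<^sub>v u k) = of_real (\<nu> k)"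
    using pencil_basis_eigen[OF p k] pencil_basis_orthonormal[OF p k k] uk K by (simp add: ip_smult_right[of _ n])
  moreover have "Re (ip (u k) (B *\<^sub>v u k)) > 0"
    using B uk pencil_basis_nonzero[OF p K k] unfolding pos_def_def by auto
  ultimately show ?thesis by simp
qed

lemma shifted_pencil_spectrum:
  assumes pw: "pencil_basis n A M w d" and herA: "hermitian n A" and pdM: "pos_def n M"
    and range: "\<And>l. l < n \<Longrightarrow> l1 \<le> d l \<and> d l \<le> lN \<and> (d l \<noteq> l1 \<longrightarrow> l2 \<le> d l)"
    and l: "\<sigma> < l1" "l1 < l2" "l2 \<le> lN" and Ti: "pos_def n Ti"
    and pu: "pencil_basis n (A - of_real \<sigma> \<cdot>\<^sub>m M) Ti u \<nu>"
    and p: "pencil_basis n (A - of_real l1 \<cdot>\<^sub>m M) Ti v \<mu>" and k: "k < n"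
  shows "0 \<le> \<mu> k"
    and "\<mu> k \<le> (lN - l1) / (lN - \<sigma>) * Max (\<nu> ` {..<n})"
    and "\<mu> k \<noteq> 0 \<Longrightarrow> (l2 - l1) / (l2 - \<sigma>) * Min (\<nu> ` {..<n}) \<le> \<mu> k"
proof -
  have Ac: "A \<in> carrier_mat n n" and Mc: "M \<in> carrier_mat n n" and Tic: "Ti \<in> carrier_mat n n"
    using hermitian_carrier[OF herA] pos_def_carrier[OF pdM] pos_def_carrier[OF Ti] .
  have Aspd: "pos_def n (A - of_real \<sigma> \<cdot>\<^sub>m M)"
    using range l(1) by (intro pencil_shift_pos_def[OF pw herA pdM]) force
  have Asc: "A - of_real \<sigma> \<cdot>\<^sub>m M \<in> carrier_mat n n" using pos_def_carrier[OF Aspd] .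
  have n: "0 < n" using k by simp
  have vk: "v k \<in> carrier_vec n" using pencil_basis_carrier[OF p k] .
  have \<mu>k: "Re (ip (v k) ((A - of_real l1 \<cdot>\<^sub>m M) *\<^sub>v v k)) = \<mu> k"
    using pencil_basis_eigen[OF p k] pencil_basis_orthonormal[OF p k k] vk Tic by (simp add: ip_smult_right[of _ n])
  have Tik: "Re (ip (v k) (Ti *\<^sub>v v k)) = 1" using pencil_basis_orthonormal[OF p k k] by simp
  show "0 \<le> \<mu> k" using pencil_shift_nonneg[OF pw Ac Mc _ vk, of l1] range \<mu>k by simp
  have "Re (ip (v k) ((A - of_real l1 \<cdot>\<^sub>m M) *\<^sub>v v k))
      \<le> (lN - l1) / (lN - \<sigma>) * Re (ip (v k) ((A - of_real \<sigma> \<cdot>\<^sub>m M) *\<^sub>v v k))"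
    by (rule shifted_form_upper_bound[OF pw Ac Mc _ l(1) vk]) (use range in auto)
  also have "\<dots> \<le> (lN - l1) / (lN - \<sigma>) * (Max (\<nu> ` {..<n}) * Re (ip (v k) (Ti *\<^sub>v v k)))"
    using pencil_rayleigh_bounds(2)[OF pu Asc Tic vk n] l by (intro mult_left_mono) auto
  finally show "\<mu> k \<le> (lN - l1) / (lN - \<sigma>) * Max (\<nu> ` {..<n})" using \<mu>k Tik by simp
  assume nz: "\<mu> k \<noteq> 0"
  have "0 \<le> Min (\<nu> ` {..<n})"
    using pencil_eigenvalues_pos[OF pu Aspd Tic] n by (subst Min_ge_iff) (auto intro: less_imp_le)
  hence "(l2 - l1) / (l2 - \<sigma>) * Min (\<nu> ` {..<n}) * Re (ip (v k) (Ti *\<^sub>v v k))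
      \<le> Re (ip (v k) ((A - of_real l1 \<cdot>\<^sub>m M) *\<^sub>v v k))"
    using range l(1,2) pencil_basis_eigen[OF p k] nz pencil_rayleigh_bounds(1)[OF pu Asc Tic _ n]
    by (intro shifted_pencil_eigenvalue_lower_bound[OF pw herA pdM pos_def_hermitian[OF Ti]
          pos_def_nonneg[OF Ti] _ _ _ vk]) auto
  thus "(l2 - l1) / (l2 - \<sigma>) * Min (\<nu> ` {..<n}) \<le> \<mu> k" using \<mu>k Tik by simp
qed

text \<open>With \<open>S = T\<^sup>1\<^sup>/\<^sup>2\<close> and \<open>Si = S\<^sup>-\<^sup>1\<close>, the spectrum of the pencil \<open>(A - \<lambda>\<^sub>1 M, T\<^sup>-\<^sup>1)\<close> lies in
  \<open>{0} \<union> [a, b]\<close>, where \<open>a\<close> and \<open>b\<close> are the extreme eigenvalues of \<open>S A\<^sub>\<sigma> S\<close> (equivalently, of the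
  pencil \<open>(A\<^sub>\<sigma>, T\<^sup>-\<^sup>1)\<close>) multiplied by \<open>(\<lambda>\<^sub>2 - \<lambda>\<^sub>1)/(\<lambda>\<^sub>2 - \<sigma>)\<close> and \<open>(\<lambda>\<^sub>n - \<lambda>\<^sub>1)/(\<lambda>\<^sub>n - \<sigma>)\<close>.\<close>

lemma preconditioned_spectrum_bounds:
  fixes A M S Si :: "complex mat" and lam \<mu> :: "nat \<Rightarrow> real" and \<sigma> :: real
  assumes herA: "hermitian n A" and pdM: "pos_def n M"
    and eig: "\<forall>t::complex. det (A - t \<cdot>\<^sub>m M) = det M * (\<Prod>j=1..n. (complex_of_real (lam j) - t))"
    and two: "2 \<le> n" and gap: "lam 1 < lam 2"
    and sorted: "\<forall>j k. 1 \<le> j \<longrightarrow> j \<le> k \<longrightarrow> k \<le> n \<longrightarrow> lam j \<le> lam k"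
    and sig: "\<sigma> < lam 1"
    and S: "hermitian n S" and Si: "hermitian n Si" and SSi: "S * Si = 1\<^sub>m n" and SiS: "Si * S = 1\<^sub>m n"
    and Ti: "pos_def n (Si * Si)"
    and p: "pencil_basis n (A - of_real (lam 1) \<cdot>\<^sub>m M) (Si * Si) v \<mu>"
  obtains a b where "0 < a" "a \<le> b"
    "b / a = cond2 (S * (A - of_real \<sigma> \<cdot>\<^sub>m M) * S) *
       ((lam n - lam 1) * (lam 2 - \<sigma>)) / ((lam 2 - lam 1) * (lam n - \<sigma>))"
    "\<And>k. k < n \<Longrightarrow> 0 \<le> \<mu> k \<and> (\<mu> k \<noteq> 0 \<longrightarrow> a \<le> \<mu> k \<and> \<mu> k \<le> b)"
proof -
  define l1 l2 lN where "l1 = lam 1" and "l2 = lam 2" and "lN = lam n"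
  define As where "As = A - of_real \<sigma> \<cdot>\<^sub>m M"
  have "0 < n" using two by simp
  have l: "\<sigma> < l1" "l1 < l2" "l2 \<le> lN"
    using gap sorted two sig unfolding l1_def l2_def lN_def by auto
  obtain w d where pw: "pencil_basis n A M w d" using pencil_basis_exists[OF herA pdM] by blast
  have range: "l1 \<le> d j \<and> d j \<le> lN \<and> (d j \<noteq> l1 \<longrightarrow> l2 \<le> d j)" if "j < n" for j
    using pencil_eigenvalue_range[OF pw hermitian_carrier[OF herA] pdM eig sorted that]
    unfolding l1_def l2_def lN_def by blast
  have Aspd: "pos_def n As"
    unfolding As_def using range l(1) by (intro pencil_shift_pos_def[OF pw herA pdM]) force
  obtain u \<nu> where pu: "pencil_basis n As (Si * Si) u \<nu>"
    using pencil_basis_exists[OF pos_def_hermitian[OF Aspd] Ti] by blast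
  define \<nu>min \<nu>max where "\<nu>min = Min (\<nu> ` {..<n})" and "\<nu>max = Max (\<nu> ` {..<n})"
  have \<nu>minp: "\<nu>min > 0" unfolding \<nu>min_def
    using pencil_eigenvalues_pos[OF pu Aspd pos_def_carrier[OF Ti]] \<open>0 < n\<close> by (subst Min_gr_iff) auto
  have \<nu>mm: "\<nu>min \<le> \<nu>max"
    unfolding \<nu>min_def \<nu>max_def using \<open>0 < n\<close> by (intro order_trans[OF Min_le Max_ge]) auto
  have kappa: "cond2 (S * As * S) = \<nu>max / \<nu>min"
    unfolding cond2_def \<nu>min_def \<nu>max_def
    using congruent_eigenvalues_eq[OF pu pos_def_hermitian[OF Aspd] pos_def_hermitian[OF Ti]
        hermitian_carrier[OF S] hermitian_carrier[OF Si] SSi SiS refl] by simp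
  define c1 c2 where "c1 = (lN - l1) / (lN - \<sigma>)" and "c2 = (l2 - l1) / (l2 - \<sigma>)"
  have c2p: "c2 > 0" and c12: "c2 \<le> c1"
    using l shift_ratio_ge[of \<sigma> l1 l2 lN] unfolding c1_def c2_def by (simp_all add: pos_divide_le_eq)
  show thesis
  proof (rule that[of "c2 * \<nu>min" "c1 * \<nu>max"])
    show "0 < c2 * \<nu>min" using c2p \<nu>minp by simp
    show "c2 * \<nu>min \<le> c1 * \<nu>max" using c12 \<nu>mm c2p \<nu>minp by (intro mult_mono) auto
    have "\<nu>max / \<nu>min * ((lN - l1) * (l2 - \<sigma>)) / ((l2 - l1) * (lN - \<sigma>)) = c1 * \<nu>max / (c2 * \<nu>min)"
      unfolding c1_def c2_def using l \<nu>minp by (simp add: field_simps)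
    thus "c1 * \<nu>max / (c2 * \<nu>min) = cond2 (S * (A - of_real \<sigma> \<cdot>\<^sub>m M) * S) *
        ((lam n - lam 1) * (lam 2 - \<sigma>)) / ((lam 2 - lam 1) * (lam n - \<sigma>))"
      using kappa unfolding As_def l1_def l2_def lN_def by simp
    fix k assume "k < n"
    from shifted_pencil_spectrum[OF pw herA pdM range l Ti pu[unfolded As_def] p[folded l1_def] this]
    show "0 \<le> \<mu> k \<and> (\<mu> k \<noteq> 0 \<longrightarrow> c2 * \<nu>min \<le> \<mu> k \<and> \<mu> k \<le> c1 * \<nu>max)"
      unfolding c1_def c2_def \<nu>min_def \<nu>max_def by auto
  qed
qed

section \<open>Energy estimate for the iteration\<close>

lemma krylov_expansion:
  assumes p: "pencil_basis n G Ti v \<mu>" and G: "G \<in> carrier_mat n n" and Ti: "Ti \<in> carrier_mat n n"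
    and T: "T \<in> carrier_mat n n" and TTi: "T * Ti = 1\<^sub>m n" and x0: "x0 \<in> carrier_vec n"
  shows "krylov G T x0 m = vsum n (\<lambda>k. (ip (v k) (Ti *\<^sub>v x0) * of_real (\<mu> k) ^ m) \<cdot>\<^sub>v v k) {..<n}"
proof (induction m)
  case 0 show ?case using pencil_basis_expansion[OF p Ti x0] by simp
next
  case (Suc m)
  have vc: "\<And>k. k \<in> {..<n} \<Longrightarrow> v k \<in> carrier_vec n" using pencil_basis_carrier[OF p] by auto
  have TG: "T *\<^sub>v (G *\<^sub>v v k) = of_real (\<mu> k) \<cdot>\<^sub>v v k" if k: "k \<in> {..<n}" for k
  proof -
    have "T *\<^sub>v (G *\<^sub>v v k) = of_real (\<mu> k) \<cdot>\<^sub>v ((T * Ti) *\<^sub>v v k)"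
      using pencil_basis_eigen[OF p] k T Ti vc[OF k] by (simp add: mult_mat_vec assoc_mult_mat_vec[of _ n n _ n])
    thus ?thesis using TTi vc[OF k] by simp
  qed
  have "krylov G T x0 (Suc m)
      = T *\<^sub>v (G *\<^sub>v vsum n (\<lambda>k. (ip (v k) (Ti *\<^sub>v x0) * of_real (\<mu> k) ^ m) \<cdot>\<^sub>v v k) {..<n})"
    using Suc by simp
  also have "\<dots> = vsum n (\<lambda>k. (ip (v k) (Ti *\<^sub>v x0) * of_real (\<mu> k) ^ m) \<cdot>\<^sub>v (T *\<^sub>v (G *\<^sub>v v k))) {..<n}"
    using mult_mat_vsum_smult[of G n "{..<n}" v, OF G vc] mult_mat_vsum_smult[OF T, of "{..<n}" "\<lambda>k. G *\<^sub>v v k"] G vc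
    by simp
  also have "\<dots> = vsum n (\<lambda>k. (ip (v k) (Ti *\<^sub>v x0) * of_real (\<mu> k) ^ Suc m) \<cdot>\<^sub>v v k) {..<n}"
    using TG vc by (intro vsum_cong) (simp add: smult_smult_assoc mult.commute mult.left_commute)
  finally show ?case .
qed

lemma krylov_poly_expansion:
  assumes vc: "\<And>k. k < n \<Longrightarrow> v k \<in> carrier_vec n"
    and kr: "\<And>m. kr m = vsum n (\<lambda>k. (z k * of_real (\<mu> k) ^ m) \<cdot>\<^sub>v v k) {..<n}"
  shows "vsum n (\<lambda>m. of_real (c m) \<cdot>\<^sub>v kr m) {..i}
    = vsum n (\<lambda>k. (z k * of_real (\<Sum>m\<le>i. c m * \<mu> k ^ m)) \<cdot>\<^sub>v v k) {..<n}"
proof (rule eq_vecI)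
  fix j assume "j < dim_vec (vsum n (\<lambda>k. (z k * of_real (\<Sum>m\<le>i. c m * \<mu> k ^ m)) \<cdot>\<^sub>v v k) {..<n})"
  hence j: "j < n" by simp
  have vd: "\<And>k. k < n \<Longrightarrow> dim_vec (v k) = n" using vc by auto
  have "vsum n (\<lambda>m. of_real (c m) \<cdot>\<^sub>v kr m) {..i} $ j
      = (\<Sum>m\<le>i. \<Sum>k<n. of_real (c m) * (z k * of_real (\<mu> k) ^ m * v k $ j))"
    using j by (simp add: kr vd sum_distrib_left)
  also have "\<dots> = (\<Sum>k<n. (z k * of_real (\<Sum>m\<le>i. c m * \<mu> k ^ m)) * v k $ j)"
    by (subst sum.swap) (simp add: sum_distrib_left sum_distrib_right mult.commute mult.left_commute)
  also have "\<dots> = vsum n (\<lambda>k. (z k * of_real (\<Sum>m\<le>i. c m * \<mu> k ^ m)) \<cdot>\<^sub>v v k) {..<n} $ j"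
    using j by (simp add: vd)
  finally show "vsum n (\<lambda>m. of_real (c m) \<cdot>\<^sub>v kr m) {..i} $ j
      = vsum n (\<lambda>k. (z k * of_real (\<Sum>m\<le>i. c m * \<mu> k ^ m)) \<cdot>\<^sub>v v k) {..<n} $ j" .
qed auto

lemma weighted_poly_square_sum_le:
  fixes \<mu> p r :: "nat \<Rightarrow> real"
  assumes \<mu>: "\<And>k. k < n \<Longrightarrow> \<mu> k \<ge> 0" and pb: "\<And>k. k < n \<Longrightarrow> \<mu> k \<noteq> 0 \<Longrightarrow> \<bar>p k\<bar> \<le> B"
    and r: "\<And>k. r k \<ge> 0"
  shows "(\<Sum>k<n. \<mu> k * ((p k)\<^sup>2 * r k)) \<le> B\<^sup>2 * (\<Sum>k<n. \<mu> k * r k)"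
  unfolding sum_distrib_left
proof (intro sum_mono)
  fix k assume k: "k \<in> {..<n}"
  show "\<mu> k * ((p k)\<^sup>2 * r k) \<le> B\<^sup>2 * (\<mu> k * r k)"
  proof (cases "\<mu> k = 0")
    case False
    hence "(p k)\<^sup>2 \<le> B\<^sup>2" using pb k by (metis abs_le_square_iff abs_of_nonneg abs_ge_zero order_trans lessThan_iff)
    hence "(p k)\<^sup>2 * (\<mu> k * r k) \<le> B\<^sup>2 * (\<mu> k * r k)" using \<mu> k r by (intro mult_right_mono) auto
    thus ?thesis by (simp add: mult.commute mult.left_commute)
  qed simp
qed

text \<open>In the \<open>Ti\<close>-orthonormal eigenbasis of the pencil \<open>(Al, Ti)\<close>, the Krylov combination with
  polynomial coefficients \<open>c\<close> scales the \<open>k\<close>-th coordinate of \<open>x0\<close> by \<open>p(\<mu> k)\<close>; energy optimality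
  of the iterate then bounds its energy by \<open>max |p|\<^sup>2\<close> over the nonzero \<open>\<mu> k\<close>.\<close>

lemma pcg_energy_poly_bound:
  fixes Al T Ti :: "complex mat" and v :: "nat \<Rightarrow> complex vec" and \<mu> :: "nat \<Rightarrow> real"
  assumes Alh: "hermitian n Al" and Th: "hermitian n T" and Ti: "Ti \<in> carrier_mat n n"
    and TTi: "T * Ti = 1\<^sub>m n" and x0: "x0 \<in> carrier_vec n"
    and p: "pencil_basis n Al Ti v \<mu>" and D: "pcg_defined Al T x0 i"
    and psd: "\<And>x. x \<in> carrier_vec n \<Longrightarrow> Re (ip x (Al *\<^sub>v x)) \<ge> 0"
    and \<mu>0: "\<And>k. k < n \<Longrightarrow> \<mu> k \<ge> 0"
    and c0: "c 0 = 1" and pb: "\<And>k. k < n \<Longrightarrow> \<mu> k \<noteq> 0 \<Longrightarrow> \<bar>\<Sum>m\<le>i. c m * \<mu> k ^ m\<bar> \<le> B"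
  shows "Re (ip (pcg_x Al T x0 i) (Al *\<^sub>v pcg_x Al T x0 i)) \<le> B\<^sup>2 * Re (ip x0 (Al *\<^sub>v x0))"
proof -
  interpret pcg_run n Al T x0 using Alh Th x0 by unfold_locales
  define z where "z k = ip (v k) (Ti *\<^sub>v x0)" for k
  define pk where "pk k = (\<Sum>m\<le>i. c m * \<mu> k ^ m)" for k
  define y where "y = vsum n (\<lambda>m. of_real (c m) \<cdot>\<^sub>v krylov Al T x0 m) {..i}"
  have opt: "Re (ip (X i) (Al *\<^sub>v X i)) \<le> Re (ip y (Al *\<^sub>v y))"
    unfolding y_def by (rule pcg_energy_optimal[OF D psd]) (use c0 in auto)
  have yE: "y = vsum n (\<lambda>k. (z k * of_real (pk k)) \<cdot>\<^sub>v v k) {..<n}"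
    unfolding y_def pk_def z_def
    by (rule krylov_poly_expansion) (use pencil_basis_carrier[OF p] krylov_expansion[OF p G_carrier Ti T_carrier TTi x0] in auto)
  have coord: "ip (v k) (Ti *\<^sub>v y) = z k * of_real (pk k)" if "k < n" for k
    unfolding yE by (rule pencil_basis_coord[OF p Ti that])
  have yc: "y \<in> carrier_vec n" unfolding yE by simp
  have "Re (ip y (Al *\<^sub>v y)) = (\<Sum>k<n. \<mu> k * ((pk k)\<^sup>2 * (cmod (z k))\<^sup>2))"
    unfolding pencil_basis_quadratic[OF p G_carrier Ti yc]
    by (intro sum.cong refl) (simp add: coord norm_mult power_mult_distrib)
  also have "\<dots> \<le> B\<^sup>2 * (\<Sum>k<n. \<mu> k * (cmod (z k))\<^sup>2)"
    by (rule weighted_poly_square_sum_le) (use \<mu>0 pb in \<open>auto simp: pk_def\<close>)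
  also have "(\<Sum>k<n. \<mu> k * (cmod (z k))\<^sup>2) = Re (ip x0 (Al *\<^sub>v x0))"
    unfolding pencil_basis_quadratic[OF p G_carrier Ti x0] z_def ..
  finally show ?thesis using opt by simp
qed

lemma pcg_energy_cheb_bound:
  fixes Al T Ti :: "complex mat" and v :: "nat \<Rightarrow> complex vec" and \<mu> :: "nat \<Rightarrow> real"
  assumes Alh: "hermitian n Al" and Th: "hermitian n T" and Ti: "Ti \<in> carrier_mat n n"
    and TTi: "T * Ti = 1\<^sub>m n" and x0: "x0 \<in> carrier_vec n"
    and p: "pencil_basis n Al Ti v \<mu>" and D: "pcg_defined Al T x0 i"
    and psd: "\<And>x. x \<in> carrier_vec n \<Longrightarrow> Re (ip x (Al *\<^sub>v x)) \<ge> 0"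
    and a: "0 < a" "a \<le> b"
    and spec: "\<And>k. k < n \<Longrightarrow> 0 \<le> \<mu> k \<and> (\<mu> k \<noteq> 0 \<longrightarrow> a \<le> \<mu> k \<and> \<mu> k \<le> b)"
  shows "Re (ip (pcg_x Al T x0 i) (Al *\<^sub>v pcg_x Al T x0 i))
    \<le> inverse ((cheb i ((b / a + 1) / (b / a - 1)))\<^sup>2) * Re (ip x0 (Al *\<^sub>v x0))"
proof (cases "i = 0")
  case True thus ?thesis by (simp add: pcg_x_def Let_def)
next
  case i: False
  have \<mu>0: "\<And>k. k < n \<Longrightarrow> 0 \<le> \<mu> k" using spec by blast
  note bound = pcg_energy_poly_bound[OF Alh Th Ti TTi x0 p D]
  show ?thesis
  proof (cases "a = b")
    case True
    txt \<open>Here \<open>b / a - 1 = 0\<close>, so the right-hand side is a junk value; the claim still holds because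
      all nonzero \<open>\<mu> k\<close> equal \<open>a\<close> and a linear polynomial annihilates them.\<close>
    obtain c where c0: "c 0 = 1" and ca: "(\<Sum>m\<le>i. c m * a ^ m) = 0"
      using poly_root_exists[OF a(1), of i] i by auto
    have pb: "\<bar>\<Sum>m\<le>i. c m * \<mu> k ^ m\<bar> \<le> 0" if "k < n" "\<mu> k \<noteq> 0" for k
    proof -
      have "\<mu> k = a" using spec[OF that(1)] that(2) True by auto
      thus ?thesis using ca by simp
    qed
    have "Re (ip (pcg_x Al T x0 i) (Al *\<^sub>v pcg_x Al T x0 i)) \<le> 0\<^sup>2 * Re (ip x0 (Al *\<^sub>v x0))"
      by (rule bound[where c = c]) (use psd \<mu>0 c0 pb in auto)
    thus ?thesis using psd[OF x0] by (simp add: order_trans)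
  next
    case False
    hence ab: "a < b" using a by simp
    obtain c where c0: "c 0 = 1"
      and cb: "\<And>t. a \<le> t \<Longrightarrow> t \<le> b \<Longrightarrow> \<bar>\<Sum>m\<le>i. c m * t ^ m\<bar> \<le> 1 / cheb i ((b + a) / (b - a))"
      using scaled_cheb_poly_exists[OF a(1) ab, of i] by auto
    have "(b / a + 1) / (b / a - 1) = (b + a) / (b - a)" using a ab by (simp add: field_simps)
    moreover have "Re (ip (pcg_x Al T x0 i) (Al *\<^sub>v pcg_x Al T x0 i))
        \<le> (1 / cheb i ((b + a) / (b - a)))\<^sup>2 * Re (ip x0 (Al *\<^sub>v x0))"
      by (rule bound[where c = c]) (use psd \<mu>0 c0 spec cb in force)+
    ultimately show ?thesis by (simp add: power_one_over inverse_eq_divide)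
  qed
qed

lemma rq_shift_bound:
  assumes A: "A \<in> carrier_mat n n" and M: "pos_def n M"
    and x0: "x0 \<in> carrier_vec n" "x0 \<noteq> 0\<^sub>v n" and x: "x \<in> carrier_vec n" "x \<noteq> 0\<^sub>v n"
    and E: "Re (ip x ((A - of_real l \<cdot>\<^sub>m M) *\<^sub>v x)) \<le> C * Re (ip x0 ((A - of_real l \<cdot>\<^sub>m M) *\<^sub>v x0))"
  shows "rq A M x - l \<le> C * ((mnorm M x0)\<^sup>2 / (mnorm M x)\<^sup>2) * (rq A M x0 - l)"
proof -
  have Mc: "M \<in> carrier_mat n n" using pos_def_carrier[OF M] .
  have N: "Re (ip y (M *\<^sub>v y)) > 0" if "y \<in> carrier_vec n" "y \<noteq> 0\<^sub>v n" for y
    using M that unfolding pos_def_def by auto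
  have rq: "rq A M y - l = Re (ip y ((A - of_real l \<cdot>\<^sub>m M) *\<^sub>v y)) / Re (ip y (M *\<^sub>v y))"
    and mn: "(mnorm M y)\<^sup>2 = Re (ip y (M *\<^sub>v y))" if "y \<in> carrier_vec n" "y \<noteq> 0\<^sub>v n" for y
    using N[OF that] that A Mc
    by (simp_all add: rq_def mnorm_def diff_smult_mat_mult_vec ip_minus_right[of _ n] ip_smult_right[of _ n]
        field_simps)
  show ?thesis
    unfolding rq[OF x] rq[OF x0] mn[OF x] mn[OF x0]
    using E N[OF x] N[OF x0] by (simp add: field_simps divide_right_mono)
qed

theorem theorem2p2:
  fixes n :: nat and A M T :: "complex mat" and lam :: "nat \<Rightarrow> real"
    and \<sigma> :: real and x0 :: "complex vec" and i :: nat
  assumes herA: "hermitian n A"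
    and pdM: "pos_def n M"
    and eig: "\<forall>t::complex. det (A - t \<cdot>\<^sub>m M) = det M * (\<Prod>j=1..n. (complex_of_real (lam j) - t))"
    and two: "2 \<le> n"
    and gap: "lam 1 < lam 2"
    and sorted: "\<forall>j k. 1 \<le> j \<longrightarrow> j \<le> k \<longrightarrow> k \<le> n \<longrightarrow> lam j \<le> lam k"
    and sig: "\<sigma> < lam 1"
    and pdT: "pos_def n T"
    and x0: "x0 \<in> carrier_vec n"
    and not_eigvec: "\<not> (x0 \<noteq> 0\<^sub>v n \<and> A *\<^sub>v x0 = complex_of_real (lam 1) \<cdot>\<^sub>v (M *\<^sub>v x0))"
    and not_Morth: "\<not> (\<forall>v \<in> carrier_vec n. A *\<^sub>v v = complex_of_real (lam 1) \<cdot>\<^sub>v (M *\<^sub>v v)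
                         \<longrightarrow> ip v (M *\<^sub>v x0) = 0)"
    and defined: "\<forall>j<i. pcg_gamma (A - complex_of_real (lam 1) \<cdot>\<^sub>m M) T x0 j \<noteq> 0 \<and>
          ip ((A - complex_of_real (lam 1) \<cdot>\<^sub>m M) *\<^sub>v pcg_p (A - complex_of_real (lam 1) \<cdot>\<^sub>m M) T x0 j)
             (pcg_p (A - complex_of_real (lam 1) \<cdot>\<^sub>m M) T x0 j) \<noteq> 0"
    and xi_nz: "pcg_x (A - complex_of_real (lam 1) \<cdot>\<^sub>m M) T x0 i \<noteq> 0\<^sub>v n"
  shows
    "let Al = A - complex_of_real (lam 1) \<cdot>\<^sub>m M;
         As = A - complex_of_real \<sigma> \<cdot>\<^sub>m M;
         S = msqrt n T;
         \<kappa> = cond2 (S * As * S);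
         \<eta> = \<kappa> * ((lam n - lam 1) * (lam 2 - \<sigma>)) / ((lam 2 - lam 1) * (lam n - \<sigma>));
         \<phi> = (\<eta> + 1) / (\<eta> - 1);
         xi = pcg_x Al T x0 i
     in rq A M xi - lam 1 \<le>
          inverse ((cheb i \<phi>)\<^sup>2) * ((mnorm M x0)\<^sup>2 / (mnorm M xi)\<^sup>2) * (rq A M x0 - lam 1)"
proof -
  define Al where "Al = A - complex_of_real (lam 1) \<cdot>\<^sub>m M"
  define xi where "xi = pcg_x Al T x0 i"
  have Alh: "hermitian n Al"
    unfolding Al_def by (rule hermitian_diff_smult[OF herA pos_def_hermitian[OF pdM]])
  obtain Si where S: "hermitian n (msqrt n T)" "hermitian n Si" "msqrt n T * Si = 1\<^sub>m n" "Si * msqrt n T = 1\<^sub>m n"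
    and Ti: "pos_def n (Si * Si)" and TTi: "T * (Si * Si) = 1\<^sub>m n"
    using msqrt_inverse_exists[OF pdT] by metis
  obtain v \<mu> where p: "pencil_basis n Al (Si * Si) v \<mu>" using pencil_basis_exists[OF Alh Ti] by blast
  obtain a b where ab: "0 < a" "a \<le> b"
    and \<eta>: "b / a = cond2 (msqrt n T * (A - complex_of_real \<sigma> \<cdot>\<^sub>m M) * msqrt n T) *
       ((lam n - lam 1) * (lam 2 - \<sigma>)) / ((lam 2 - lam 1) * (lam n - \<sigma>))"
    and spec: "\<And>k. k < n \<Longrightarrow> 0 \<le> \<mu> k \<and> (\<mu> k \<noteq> 0 \<longrightarrow> a \<le> \<mu> k \<and> \<mu> k \<le> b)"
    using preconditioned_spectrum_bounds[OF herA pdM eig two gap sorted sig S Ti p[unfolded Al_def]] by blast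
  have psd: "\<And>x. x \<in> carrier_vec n \<Longrightarrow> Re (ip x (Al *\<^sub>v x)) \<ge> 0"
    using pencil_basis_nonneg[OF p hermitian_carrier[OF Alh] pos_def_carrier[OF Ti]] spec by blast
  have E: "Re (ip xi (Al *\<^sub>v xi)) \<le> inverse ((cheb i ((b / a + 1) / (b / a - 1)))\<^sup>2) * Re (ip x0 (Al *\<^sub>v x0))"
    unfolding xi_def using defined
    by (intro pcg_energy_cheb_bound[OF Alh pos_def_hermitian[OF pdT] pos_def_carrier[OF Ti] TTi x0 p _ psd ab spec])
      (simp add: pcg_defined_def Al_def)
  txt \<open>Hypothesis \<open>not_Morth\<close> is only needed to exclude \<open>x0 = 0\<close>.\<close>
  have x0_nz: "x0 \<noteq> 0\<^sub>v n"
    using not_Morth pos_def_carrier[OF pdM] by (auto simp: mult_mat_vec_zero ip_zero_right)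
  have xi: "xi \<in> carrier_vec n" "xi \<noteq> 0\<^sub>v n"
    using pcg_run.x_carrier[OF pcg_run.intro[OF Alh pos_def_hermitian[OF pdT] x0]] xi_nz
    unfolding xi_def Al_def by auto
  show ?thesis
    unfolding Let_def \<eta>[symmetric] xi_def[symmetric] Al_def[symmetric]
    using rq_shift_bound[OF hermitian_carrier[OF herA] pdM x0 x0_nz xi E[unfolded Al_def]] .
qed

end
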